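(* Let $E$ be an Archimedean vector lattice and let $T:E\to S(X)$ be Wickstead's representation of $E$, namely: $(B_\alpha)_{\alpha}$ is a family of pairwise disjoint bands of $E$, each $B_\alpha$ having a weak unit $x_\alpha$, such that every $x\in E$ is written as $x=\bigvee_\alpha y_\alpha$ with $y_\alpha\in B_\alpha$; for each $\alpha$, $X_\alpha$ is a compact Hausdorff space and $T_\alpha:B_\alpha\to S(X_\alpha)$ is an injective lattice homomorphism with $T_\alpha(x_\alpha)=\mathbf{1}_{X_\alpha}$ and the supremum-norm closure of $T_\alpha$ of the ideal generated by $x_\alpha$ in $B_\alpha$ equal to $C(X_\alpha)$; $X=\bigsqcup_\alpha X_\alpha$ is the disjoint union; and $T(x)=(T_\alpha(y_\alpha))_\alpha$ under the identification $S(X)=\prod_\alpha S(X_\alpha)$. Then $T$ is order continuous and $uo$-continuous, and $T^{-1}:T(E)\to E$ is $uo$-continuous (if $T(x_\beta)\xrightarrow{uo}T(x)$ in $S(X)$ then $x_\beta\xrightarrow{uo}x$ in $E$).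
   Context: For a topological space $X$, $S(X)$ is the Archimedean vector lattice of equivalence classes of continuous real-valued functions defined on open dense subsets of $X$ (two functions identified if they agree on the intersection of their domains), with pointwise operations; $\mathbf{1}_X$ is the constant function $1$. For a disjoint union $X=\bigsqcup_\alpha X_\alpha$ of topological spaces, $S(X)$ is identified (as ordered vector space, componentwise order) with $\prod_\alpha S(X_\alpha)$. A net $(x_\alpha)$ in a vector lattice converges in order to $x$ if there is a net $u_\gamma\downarrow0$ such that for each $\gamma$ there is $\alpha_0$ with $|x_\alpha-x|\le u_\gamma$ for $\alpha\ge\alpha_0$; it is $uo$-convergent to $x$ if $|x_\alpha-x|\wedge w\to 0$ in order for every positive $w$. An operator is order continuous if it maps order null nets to order null nets. *)

theory Defs
  imports "HOL-Analysis.Analysis"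
begin

definition vabs :: "'e::{ordered_real_vector,lattice} \<Rightarrow> 'e" where
  "vabs x = sup x (- x)"

definition vpos :: "'e::{ordered_real_vector,lattice} \<Rightarrow> 'e" where
  "vpos x = sup x 0"

definition vneg :: "'e::{ordered_real_vector,lattice} \<Rightarrow> 'e" where
  "vneg x = sup (- x) 0"

definition archimedean_vl :: "'e::{ordered_real_vector,lattice} itself \<Rightarrow> bool" where
  "archimedean_vl _ \<longleftrightarrow>
     (\<forall>x y::'e. 0 \<le> x \<longrightarrow> (\<forall>n::nat. real n *\<^sub>R x \<le> y) \<longrightarrow> x = 0)"

definition is_sup_of :: "'e::{ordered_real_vector,lattice} set \<Rightarrow> 'e \<Rightarrow> bool" where
  "is_sup_of A s \<longleftrightarrow> (\<forall>a\<in>A. a \<le> s) \<and> (\<forall>t. (\<forall>a\<in>A. a \<le> t) \<longrightarrow> s \<le> t)"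

definition vdisjoint :: "'e::{ordered_real_vector,lattice} \<Rightarrow> 'e \<Rightarrow> bool" where
  "vdisjoint x y \<longleftrightarrow> inf (vabs x) (vabs y) = 0"

definition is_ideal :: "'e::{ordered_real_vector,lattice} set \<Rightarrow> bool" where
  "is_ideal B \<longleftrightarrow> 0 \<in> B \<and> (\<forall>a\<in>B. \<forall>b\<in>B. a + b \<in> B) \<and> (\<forall>c. \<forall>a\<in>B. c *\<^sub>R a \<in> B)
     \<and> (\<forall>a\<in>B. \<forall>y. vabs y \<le> vabs a \<longrightarrow> y \<in> B)"

definition is_band :: "'e::{ordered_real_vector,lattice} set \<Rightarrow> bool" where
  "is_band B \<longleftrightarrow> is_ideal B \<and> (\<forall>A s. A \<subseteq> B \<longrightarrow> is_sup_of A s \<longrightarrow> s \<in> B)"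

definition weak_unit_of :: "'e::{ordered_real_vector,lattice} set \<Rightarrow> 'e \<Rightarrow> bool" where
  "weak_unit_of B e \<longleftrightarrow> e \<in> B \<and> 0 \<le> e \<and> (\<forall>y\<in>B. inf (vabs y) e = 0 \<longrightarrow> y = 0)"

definition principal_ideal_in :: "'e::{ordered_real_vector,lattice} set \<Rightarrow> 'e \<Rightarrow> 'e set" where
  "principal_ideal_in B e = {y\<in>B. \<exists>n::nat. vabs y \<le> real n *\<^sub>R e}"

definition directed_set :: "'b set \<Rightarrow> ('b \<Rightarrow> 'b \<Rightarrow> bool) \<Rightarrow> bool" where
  "directed_set J r \<longleftrightarrow> J \<noteq> {} \<and> (\<forall>a\<in>J. r a a)
     \<and> (\<forall>a\<in>J. \<forall>b\<in>J. \<forall>c\<in>J. r a b \<longrightarrow> r b c \<longrightarrow> r a c)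
     \<and> (\<forall>a\<in>J. \<forall>b\<in>J. \<exists>c\<in>J. r a c \<and> r b c)"

definition evtl :: "'b set \<Rightarrow> ('b \<Rightarrow> 'b \<Rightarrow> bool) \<Rightarrow> ('b \<Rightarrow> bool) \<Rightarrow> bool" where
  "evtl J r P \<longleftrightarrow> (\<exists>b0\<in>J. \<forall>b\<in>J. r b0 b \<longrightarrow> P b)"

text \<open>The dominating net u_gamma decreasing to 0
  is represented by its (downward directed) range D, whose infimum is 0.\<close>
definition oconv_gen ::
  "'v set \<Rightarrow> ('v \<Rightarrow> 'v \<Rightarrow> bool) \<Rightarrow> 'v \<Rightarrow> ('v \<Rightarrow> 'v \<Rightarrow> 'v)
    \<Rightarrow> 'b set \<Rightarrow> ('b \<Rightarrow> 'b \<Rightarrow> bool) \<Rightarrow> ('b \<Rightarrow> 'v) \<Rightarrow> 'v \<Rightarrow> bool" where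
  "oconv_gen C le z dst J r x l \<longleftrightarrow>
     (\<exists>D. D \<subseteq> C \<and> D \<noteq> {} \<and> (\<forall>d\<in>D. le z d)
        \<and> (\<forall>a\<in>D. \<forall>b\<in>D. \<exists>c\<in>D. le c a \<and> le c b)
        \<and> (\<forall>w\<in>C. (\<forall>d\<in>D. le w d) \<longrightarrow> le w z)
        \<and> (\<forall>d\<in>D. evtl J r (\<lambda>\<beta>. le (dst (x \<beta>) l) d)))"

definition uoconv_gen ::
  "'v set \<Rightarrow> ('v \<Rightarrow> 'v \<Rightarrow> bool) \<Rightarrow> 'v \<Rightarrow> ('v \<Rightarrow> 'v \<Rightarrow> 'v) \<Rightarrow> ('v \<Rightarrow> 'v \<Rightarrow> 'v)
    \<Rightarrow> 'b set \<Rightarrow> ('b \<Rightarrow> 'b \<Rightarrow> bool) \<Rightarrow> ('b \<Rightarrow> 'v) \<Rightarrow> 'v \<Rightarrow> bool" where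
  "uoconv_gen C le z dst mn J r x l \<longleftrightarrow>
     (\<forall>w\<in>C. le z w \<longrightarrow> oconv_gen C le z dst J r (\<lambda>\<beta>. mn (dst (x \<beta>) l) w) z)"

definition oconvE :: "'b set \<Rightarrow> ('b \<Rightarrow> 'b \<Rightarrow> bool) \<Rightarrow> ('b \<Rightarrow> 'e::{ordered_real_vector,lattice}) \<Rightarrow> 'e \<Rightarrow> bool" where
  "oconvE J r x l = oconv_gen UNIV (\<le>) 0 (\<lambda>a b. vabs (a - b)) J r x l"

definition uoconvE :: "'b set \<Rightarrow> ('b \<Rightarrow> 'b \<Rightarrow> bool) \<Rightarrow> ('b \<Rightarrow> 'e::{ordered_real_vector,lattice}) \<Rightarrow> 'e \<Rightarrow> bool" where
  "uoconvE J r x l = uoconv_gen UNIV (\<le>) 0 (\<lambda>a b. vabs (a - b)) inf J r x l"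

text \<open>Representatives of elements of S(X): pairs (U,f) with U open dense in X and f continuous
  on U.  Two representatives are identified (sequiv) iff they agree on the intersection of the
  domains; the order and the operations are pointwise on the intersection of the domains.\<close>
type_synonym 'x srep = "'x set \<times> ('x \<Rightarrow> real)"

definition Srep :: "'x topology \<Rightarrow> 'x srep set" where
  "Srep X = {(U, f). openin X U \<and> X closure_of U = topspace X
                      \<and> continuous_map (subtopology X U) euclideanreal f}"

definition sequiv :: "'x srep \<Rightarrow> 'x srep \<Rightarrow> bool" where
  "sequiv p q \<longleftrightarrow> (\<forall>t\<in>fst p \<inter> fst q. snd p t = snd q t)"

definition sle :: "'x srep \<Rightarrow> 'x srep \<Rightarrow> bool" where
  "sle p q \<longleftrightarrow> (\<forall>t\<in>fst p \<inter> fst q. snd p t \<le> snd q t)"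

definition szero :: "'x topology \<Rightarrow> 'x srep" where
  "szero X = (topspace X, \<lambda>_. 0)"

definition sone :: "'x topology \<Rightarrow> 'x srep" where
  "sone X = (topspace X, \<lambda>_. 1)"

definition splus :: "'x srep \<Rightarrow> 'x srep \<Rightarrow> 'x srep" where
  "splus p q = (fst p \<inter> fst q, \<lambda>t. snd p t + snd q t)"

definition sminus :: "'x srep \<Rightarrow> 'x srep \<Rightarrow> 'x srep" where
  "sminus p q = (fst p \<inter> fst q, \<lambda>t. snd p t - snd q t)"

definition sscale :: "real \<Rightarrow> 'x srep \<Rightarrow> 'x srep" where
  "sscale c p = (fst p, \<lambda>t. c * snd p t)"

definition ssup :: "'x srep \<Rightarrow> 'x srep \<Rightarrow> 'x srep" where
  "ssup p q = (fst p \<inter> fst q, \<lambda>t. max (snd p t) (snd q t))"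

definition sinf :: "'x srep \<Rightarrow> 'x srep \<Rightarrow> 'x srep" where
  "sinf p q = (fst p \<inter> fst q, \<lambda>t. min (snd p t) (snd q t))"

definition sabs :: "'x srep \<Rightarrow> 'x srep" where
  "sabs p = (fst p, \<lambda>t. \<bar>snd p t\<bar>)"

definition oconvS :: "'x topology \<Rightarrow> 'b set \<Rightarrow> ('b \<Rightarrow> 'b \<Rightarrow> bool) \<Rightarrow> ('b \<Rightarrow> 'x srep) \<Rightarrow> 'x srep \<Rightarrow> bool" where
  "oconvS X J r x l = oconv_gen (Srep X) sle (szero X) (\<lambda>p q. sabs (sminus p q)) J r x l"

definition uoconvS :: "'x topology \<Rightarrow> 'b set \<Rightarrow> ('b \<Rightarrow> 'b \<Rightarrow> bool) \<Rightarrow> ('b \<Rightarrow> 'x srep) \<Rightarrow> 'x srep \<Rightarrow> bool" where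
  "uoconvS X J r x l = uoconv_gen (Srep X) sle (szero X) (\<lambda>p q. sabs (sminus p q)) sinf J r x l"

definition inj_lattice_hom_S ::
  "'e::{ordered_real_vector,lattice} set \<Rightarrow> 'x topology \<Rightarrow> ('e \<Rightarrow> 'x srep) \<Rightarrow> bool" where
  "inj_lattice_hom_S B Y F \<longleftrightarrow>
     (\<forall>a\<in>B. F a \<in> Srep Y)
   \<and> (\<forall>a\<in>B. \<forall>b\<in>B. sequiv (F (a + b)) (splus (F a) (F b)))
   \<and> (\<forall>c. \<forall>a\<in>B. sequiv (F (c *\<^sub>R a)) (sscale c (F a)))
   \<and> (\<forall>a\<in>B. \<forall>b\<in>B. sequiv (F (sup a b)) (ssup (F a) (F b)))
   \<and> (\<forall>a\<in>B. \<forall>b\<in>B. sequiv (F (inf a b)) (sinf (F a) (F b)))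
   \<and> (\<forall>a\<in>B. \<forall>b\<in>B. sequiv (F a) (F b) \<longrightarrow> a = b)"

text \<open>C(Y) inside S(Y): representatives (topspace Y, g) with g continuous on Y.
  The sup-norm closure of F(I) equals C(Y): F(I) is contained in C(Y) and is uniformly dense.\<close>
definition supnorm_closure_is_C ::
  "'x topology \<Rightarrow> ('e \<Rightarrow> 'x srep) \<Rightarrow> 'e set \<Rightarrow> bool" where
  "supnorm_closure_is_C Y F I \<longleftrightarrow>
     (\<forall>y\<in>I. \<exists>g. continuous_map Y euclideanreal g \<and> sequiv (F y) (topspace Y, g))
   \<and> (\<forall>g. continuous_map Y euclideanreal g \<longrightarrow> (\<forall>\<epsilon>>0. \<exists>y\<in>I. \<exists>h.
          continuous_map Y euclideanreal h \<and> sequiv (F y) (topspace Y, h)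
          \<and> (\<forall>t\<in>topspace Y. \<bar>g t - h t\<bar> \<le> \<epsilon>)))"

text \<open>Restriction of an element of S(disjoint union) to the component alpha (the identification
  S(X) = prod_alpha S(X_alpha)).\<close>
definition sslice :: "'i \<Rightarrow> ('i \<times> 'x) srep \<Rightarrow> 'x srep" where
  "sslice \<alpha> p = ({t. (\<alpha>, t) \<in> fst p}, \<lambda>t. snd p (\<alpha>, t))"

text \<open>y is the decomposition of x along the bands: y_alpha in B_alpha and
  x = sup_alpha y_alpha, read for positive and negative parts separately.\<close>
definition band_decomp ::
  "'i set \<Rightarrow> ('i \<Rightarrow> 'e::{ordered_real_vector,lattice} set) \<Rightarrow> 'e \<Rightarrow> ('i \<Rightarrow> 'e) \<Rightarrow> bool" where
  "band_decomp I B x y \<longleftrightarrow> (\<forall>\<alpha>\<in>I. y \<alpha> \<in> B \<alpha>)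
     \<and> is_sup_of ((\<lambda>\<alpha>. vpos (y \<alpha>)) ` I) (vpos x)
     \<and> is_sup_of ((\<lambda>\<alpha>. vneg (y \<alpha>)) ` I) (vneg x)"

end

theory Submission
  imports Defs "HOL-Library.Lattice_Algebras"
begin

text \<open>
  The key fact is that T(E) is order dense in S(X): a positive h in S(X) is the supremum of the
  elements T f below it. Near a point of a slice X\<alpha>, Urysohn's lemma gives a continuous bump below h,
  and the bump is approximated uniformly from below by some T\<alpha> f, because T\<alpha> maps the ideal
  generated by the weak unit onto a dense subspace of C(X\<alpha>).

  Order density implies that T maps sets with infimum 0 to sets with infimum 0, which is order
  continuity. For uo-continuity of T, if |x\<beta> - x| \<and> v is eventually below d then
  |T x\<beta> - T x| \<and> w is eventually below T d + (w - w \<and> T v); taking v = n u\<alpha> truncates w at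
  height n on the slice X\<alpha>. For the inverse, if m is a lower bound of the eventual bounds of
  |x\<beta> - x| \<and> v, then order density turns every eventual bound d of |T x\<beta> - T x| \<and> T v into
  elements v - f of E above m, which forces T m \<le> d.
\<close>

section \<open>Vector lattice arithmetic\<close>

interpretation vl: lattice_ab_group_add_abs vabs "(+)" "0::'e::{ordered_real_vector,lattice}"
    "(-)" uminus "(\<le>)" "(<)" inf sup
  by unfold_locales (simp add: vabs_def)

lemma vpos_eq_pprt: "vpos x = vl.pprt x"
  by (simp add: vpos_def vl.pprt_def)

lemma vneg_eq_minus_nprt: "vneg x = - vl.nprt x"
  by (simp add: vneg_def vl.nprt_def vl.neg_inf_eq_sup)

lemma vpos_nonneg: "0 \<le> vpos x"
  by (simp add: vpos_def)

lemma vneg_nonneg: "0 \<le> vneg x"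
  by (simp add: vneg_def)

lemma vpos_minus_vneg: "vpos x - vneg x = x"
  using vl.prts[of x] by (simp add: vpos_eq_pprt vneg_eq_minus_nprt)

lemma vabs_eq_vpos_add_vneg: "vabs x = vpos x + vneg x"
  by (simp add: vl.abs_prts vpos_eq_pprt vneg_eq_minus_nprt)

lemma vpos_le_vabs: "vpos x \<le> vabs x"
  by (simp add: vabs_eq_vpos_add_vneg vneg_nonneg)

lemma vpos_of_nonneg: "0 \<le> x \<Longrightarrow> vpos x = x"
  by (simp add: vpos_def sup_absorb1)

lemma vneg_of_nonneg: "0 \<le> x \<Longrightarrow> vneg x = 0"
  by (simp add: vneg_def sup_absorb2)

lemma nonneg_iff_vneg_eq_0: "0 \<le> x \<longleftrightarrow> vneg x = 0"
  by (metis diff_zero vneg_of_nonneg vpos_minus_vneg vpos_nonneg)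

lemma vpos_uminus: "vpos (- x) = vneg x"
  by (simp add: vpos_def vneg_def)

lemma inf_add_le_add_inf:
  fixes a b c :: "'e::{ordered_real_vector,lattice}"
  assumes "0 \<le> a" "0 \<le> b" "0 \<le> c"
  shows "inf (a + b) c \<le> inf a c + inf b c"
proof -
  have "inf a c + inf b c = inf (inf (a + b) (c + b)) (inf (a + c) (c + c))"
    by (simp add: vl.add_inf_distrib_left vl.add_inf_distrib_right)
  moreover have "inf (a + b) c \<le> inf (inf (a + b) (c + b)) (inf (a + c) (c + c))"
    using assms by (auto intro: le_infI1 le_infI2 add_increasing add_increasing2)
  ultimately show ?thesis
    by simp
qed

lemma is_sup_of_inf_left:
  assumes "is_sup_of A s"
  shows "is_sup_of ((\<lambda>a. inf z a) ` A) (inf z s)"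
  unfolding is_sup_of_def
proof safe
  fix a assume "a \<in> A"
  then show "inf z a \<le> inf z s"
    using assms unfolding is_sup_of_def by (meson inf_mono order_refl)
next
  fix t assume ub: "\<forall>v\<in>(\<lambda>a. inf z a) ` A. v \<le> t"
  have "a \<le> t + sup z s - z" if "a \<in> A" for a
  proof -
    have "a = inf z a + sup z a - z"
      using vl.add_eq_inf_sup[of z a] by (simp add: algebra_simps)
    also have "\<dots> \<le> t + sup z s - z"
      using ub that assms unfolding is_sup_of_def
      by (intro diff_right_mono add_mono) (auto intro: le_supI2)
    finally show ?thesis .
  qed
  then have "s \<le> t + sup z s - z"
    using assms unfolding is_sup_of_def by blast
  then show "inf z s \<le> t"
    using vl.add_eq_inf_sup[of z s] by (simp add: algebra_simps)
qed

lemma is_sup_of_unique: "is_sup_of A s \<Longrightarrow> is_sup_of A t \<Longrightarrow> s = t"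
  unfolding is_sup_of_def by (meson order_antisym)

section \<open>Representatives of elements of S(X)\<close>

definition dense_openin :: "'x topology \<Rightarrow> 'x set \<Rightarrow> bool" where
  "dense_openin Y U \<longleftrightarrow> openin Y U \<and> Y closure_of U = topspace Y"

lemma dense_openin_meets:
  "dense_openin Y V \<Longrightarrow> openin Y W \<Longrightarrow> W \<noteq> {} \<Longrightarrow> \<exists>s\<in>W. s \<in> V"
  unfolding dense_openin_def dense_intersects_open by blast

lemma dense_openin_Int:
  assumes "dense_openin Y U" "dense_openin Y V"
  shows "dense_openin Y (U \<inter> V)"
proof -
  have "U \<inter> V \<inter> W \<noteq> {}" if "openin Y W" "W \<noteq> {}" for W
  proof -
    have "openin Y (U \<inter> W)" "U \<inter> W \<noteq> {}"
      using assms(1) that dense_openin_meets[of Y U W] unfolding dense_openin_def by auto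
    then show ?thesis
      using dense_openin_meets[OF assms(2)] by blast
  qed
  then show ?thesis
    using assms unfolding dense_openin_def dense_intersects_open by blast
qed

lemma dense_openin_topspace: "dense_openin Y (topspace Y)"
  unfolding dense_openin_def by simp

lemma openin_positive_set:
  assumes "openin Y U" "continuous_map (subtopology Y U) euclideanreal F"
  shows "openin Y {s \<in> U. 0 < F s}"
proof -
  have "openin (subtopology Y U) {s \<in> topspace (subtopology Y U). F s \<in> {0<..}}"
    by (rule openin_continuous_map_preimage[OF assms(2)]) auto
  moreover have "{s \<in> topspace (subtopology Y U). F s \<in> {0<..}} = {s \<in> U. 0 < F s}"
    using openin_subset[OF assms(1)] by auto
  ultimately show ?thesis
    using assms(1) openin_trans_full by metis
qed

lemma le_if_le_on_dense:
  assumes "openin Y U" "continuous_map (subtopology Y U) euclideanreal F"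
    "continuous_map (subtopology Y U) euclideanreal G" "dense_openin Y V"
    "\<forall>s\<in>U \<inter> V. F s \<le> G s" "t \<in> U"
  shows "F t \<le> G t"
proof (rule ccontr)
  assume "\<not> F t \<le> G t"
  have "openin Y {s \<in> U. 0 < F s - G s}"
    using assms by (intro openin_positive_set continuous_map_diff) auto
  moreover have "t \<in> {s \<in> U. 0 < F s - G s}"
    using \<open>\<not> F t \<le> G t\<close> assms(6) by auto
  ultimately obtain s where "s \<in> {s \<in> U. 0 < F s - G s}" "s \<in> V"
    using dense_openin_meets[OF assms(4)] by blast
  then show False
    using assms(5) by force
qed

lemma SrepD:
  assumes "p \<in> Srep Y"
  shows "dense_openin Y (fst p)" "openin Y (fst p)" "fst p \<subseteq> topspace Y"
    "continuous_map (subtopology Y (fst p)) euclideanreal (snd p)"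
proof -
  obtain U f where p: "p = (U, f)"
    by (cases p)
  show "dense_openin Y (fst p)" "openin Y (fst p)"
    "continuous_map (subtopology Y (fst p)) euclideanreal (snd p)"
    using assms unfolding p Srep_def dense_openin_def by simp_all
  then show "fst p \<subseteq> topspace Y"
    by (simp add: openin_subset)
qed

lemma SrepI:
  "dense_openin Y U \<Longrightarrow> continuous_map (subtopology Y U) euclideanreal f \<Longrightarrow> (U, f) \<in> Srep Y"
  unfolding Srep_def dense_openin_def by auto

lemma Srep_continuous_on_subset:
  "p \<in> Srep Y \<Longrightarrow> U \<subseteq> fst p \<Longrightarrow> continuous_map (subtopology Y U) euclideanreal (snd p)"
  using SrepD(4) continuous_map_from_subtopology_mono by blast

lemma Srep_continuous_map: "continuous_map Y euclideanreal g \<Longrightarrow> (topspace Y, g) \<in> Srep Y"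
  by (rule SrepI) (auto simp: dense_openin_topspace continuous_map_from_subtopology)

lemma Srep_szero: "szero Y \<in> Srep Y"
  unfolding szero_def by (rule Srep_continuous_map) simp

lemma Srep_splus: "p \<in> Srep Y \<Longrightarrow> q \<in> Srep Y \<Longrightarrow> splus p q \<in> Srep Y"
  unfolding splus_def
  by (rule SrepI) (auto simp: dense_openin_Int SrepD intro!: continuous_map_add Srep_continuous_on_subset)

lemma Srep_sminus: "p \<in> Srep Y \<Longrightarrow> q \<in> Srep Y \<Longrightarrow> sminus p q \<in> Srep Y"
  unfolding sminus_def
  by (rule SrepI) (auto simp: dense_openin_Int SrepD intro!: continuous_map_diff Srep_continuous_on_subset)

lemma Srep_ssup: "p \<in> Srep Y \<Longrightarrow> q \<in> Srep Y \<Longrightarrow> ssup p q \<in> Srep Y"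
  unfolding ssup_def
  by (rule SrepI) (auto simp: dense_openin_Int SrepD intro!: continuous_map_real_max Srep_continuous_on_subset)

lemma Srep_sinf: "p \<in> Srep Y \<Longrightarrow> q \<in> Srep Y \<Longrightarrow> sinf p q \<in> Srep Y"
  unfolding sinf_def
  by (rule SrepI) (auto simp: dense_openin_Int SrepD intro!: continuous_map_real_min Srep_continuous_on_subset)

lemma Srep_sabs: "p \<in> Srep Y \<Longrightarrow> sabs p \<in> Srep Y"
  unfolding sabs_def
  by (rule SrepI) (auto simp: SrepD intro!: continuous_map_real_abs Srep_continuous_on_subset)

lemma sleD: "sle p q \<Longrightarrow> t \<in> fst p \<Longrightarrow> t \<in> fst q \<Longrightarrow> snd p t \<le> snd q t"
  unfolding sle_def by blast

lemma sle_if_le_on_dense: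
  assumes "p \<in> Srep Y" "q \<in> Srep Y" "dense_openin Y V"
    "\<forall>t\<in>fst p \<inter> fst q \<inter> V. snd p t \<le> snd q t"
  shows "sle p q"
  unfolding sle_def
proof
  fix t assume "t \<in> fst p \<inter> fst q"
  then show "snd p t \<le> snd q t"
    using assms
    by (intro le_if_le_on_dense[where U = "fst p \<inter> fst q" and V = V])
       (auto simp: SrepD intro!: Srep_continuous_on_subset)
qed

lemma sequiv_iff_sle: "sequiv p q \<longleftrightarrow> sle p q \<and> sle q p"
  unfolding sle_def sequiv_def by (auto intro: order_antisym)

lemma sequiv_if_eq_on_dense:
  assumes "p \<in> Srep Y" "q \<in> Srep Y" "dense_openin Y V"
    "\<forall>t\<in>fst p \<inter> fst q \<inter> V. snd p t = snd q t"
  shows "sequiv p q"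
  unfolding sequiv_iff_sle using assms by (auto intro!: sle_if_le_on_dense)

lemma sle_trans:
  assumes "p \<in> Srep Y" "q \<in> Srep Y" "r \<in> Srep Y" "sle p q" "sle q r"
  shows "sle p r"
proof (rule sle_if_le_on_dense[OF assms(1,3) SrepD(1)[OF assms(2)]])
  show "\<forall>t\<in>fst p \<inter> fst r \<inter> fst q. snd p t \<le> snd r t"
    using assms(4,5) by (meson IntD1 IntD2 order_trans sleD)
qed

lemma sle_sinf_left: "sle (sinf p q) p"
  and sle_sinf_right: "sle (sinf p q) q"
  unfolding sle_def sinf_def by auto

lemma sle_sinfI: "sle r p \<Longrightarrow> sle r q \<Longrightarrow> sle r (sinf p q)"
  unfolding sle_def sinf_def by auto

lemma szero_sle_iff: "p \<in> Srep Y \<Longrightarrow> sle (szero Y) p \<longleftrightarrow> (\<forall>t\<in>fst p. 0 \<le> snd p t)"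
  unfolding sle_def szero_def using SrepD(3) by fastforce

lemma sle_szero_iff: "p \<in> Srep Y \<Longrightarrow> sle p (szero Y) \<longleftrightarrow> (\<forall>t\<in>fst p. snd p t \<le> 0)"
  unfolding sle_def szero_def using SrepD(3) by fastforce

lemma sle_szero_if_le_truncations:
  assumes "l \<in> Srep Y" "w \<in> Srep Y"
    and "\<And>n::nat. sle l (sminus w (sinf w (topspace Y, \<lambda>_. real n)))"
  shows "sle l (szero Y)"
proof (rule sle_if_le_on_dense[OF assms(1) Srep_szero SrepD(1)[OF assms(2)]], intro ballI)
  fix t assume t: "t \<in> fst l \<inter> fst (szero Y) \<inter> fst w"
  then have "snd l t \<le> snd w t - min (snd w t) (real (nat \<lceil>snd w t\<rceil>))"
    using sleD[OF assms(3)] by (simp add: sminus_def sinf_def szero_def)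
  moreover have "snd w t \<le> real (nat \<lceil>snd w t\<rceil>)"
    by linarith
  ultimately show "snd l t \<le> snd (szero Y) t"
    by (simp add: szero_def)
qed

lemma continuous_minorant_bump:
  assumes Y: "compact_space Y" "Hausdorff_space Y" and U: "openin Y U"
    and h: "continuous_map (subtopology Y U) euclideanreal h" "\<And>s. s \<in> U \<Longrightarrow> 0 \<le> h s"
    and t0: "t0 \<in> U" and \<eta>: "0 < \<eta>"
  obtains g where "continuous_map Y euclideanreal g" "\<And>s. s \<in> topspace Y \<Longrightarrow> 0 \<le> g s"
    "\<And>s. s \<in> U \<Longrightarrow> g s \<le> h s" "h t0 - \<eta> < g t0"
proof (cases "h t0 < \<eta>")
  case True
  show ?thesis
    by (rule that[of "\<lambda>_. 0"]) (use True h in auto)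
next
  case False
  define c where "c = h t0 - \<eta> / 2"
  define W where "W = {s \<in> U. 0 < h s - c}"
  have "openin Y W"
    unfolding W_def using U h by (intro openin_positive_set continuous_map_diff) auto
  then have closed: "closedin Y (topspace Y - W)" "closedin Y {t0}"
    using t0 U Hausdorff_imp_t1_space[OF Y(2)] openin_subset
    by (auto simp: t1_space_closedin_singleton)
  moreover have "disjnt (topspace Y - W) {t0}"
    using t0 \<eta> by (simp add: W_def c_def)
  moreover have "normal_space Y"
    using Y by (simp add: compact_Hausdorff_or_regular_imp_normal_space)
  moreover have "0 \<le> c"
    using False \<eta> by (simp add: c_def)
  ultimately obtain g where g: "continuous_map Y (top_of_set {0..c}) g"
    "g ` (topspace Y - W) \<subseteq> {0}" "g ` {t0} \<subseteq> {c}"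
    using Urysohn_lemma by metis
  have range: "0 \<le> g s \<and> g s \<le> c" if "s \<in> topspace Y" for s
    using g(1) that unfolding continuous_map_in_subtopology by auto
  show ?thesis
  proof (rule that[of g])
    show "continuous_map Y euclideanreal g"
      using g(1) unfolding continuous_map_in_subtopology by blast
    show "g s \<le> h s" if "s \<in> U" for s
      using that range[of s] g(2) h(2)[OF that] openin_subset[OF U]
      by (cases "s \<in> W") (auto simp: W_def image_subset_iff)
    show "h t0 - \<eta> < g t0"
      using g(3) \<eta> by (simp add: c_def)
  qed (use range in blast)
qed

section \<open>Slices of a disjoint sum\<close>

lemma openin_slice:
  "openin (sum_topology X I) U \<Longrightarrow> \<alpha> \<in> I \<Longrightarrow> openin (X \<alpha>) {s. (\<alpha>, s) \<in> U}"
  unfolding openin_sum_topology by blast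

lemma dense_openin_slice:
  assumes "dense_openin (sum_topology X I) U" "\<alpha> \<in> I"
  shows "dense_openin (X \<alpha>) {s. (\<alpha>, s) \<in> U}"
proof -
  have "{s. (\<alpha>, s) \<in> U} \<inter> W \<noteq> {}" if "openin (X \<alpha>) W" "W \<noteq> {}" for W
  proof -
    have "openin (sum_topology X I) ((\<lambda>s. (\<alpha>, s)) ` W)"
      using open_map_component_injection[OF assms(2)] that(1) unfolding open_map_def by blast
    from dense_openin_meets[OF assms(1) this] show ?thesis
      using that(2) by auto
  qed
  moreover have "openin (X \<alpha>) {s. (\<alpha>, s) \<in> U}"
    using assms openin_slice unfolding dense_openin_def by fast
  ultimately show ?thesis
    unfolding dense_openin_def dense_intersects_open by auto
qed

lemma continuous_map_slice:
  assumes "p \<in> Srep (sum_topology X I)" "\<alpha> \<in> I" "S \<subseteq> {s. (\<alpha>, s) \<in> fst p}"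
  shows "continuous_map (subtopology (X \<alpha>) S) euclideanreal (\<lambda>s. snd p (\<alpha>, s))"
proof -
  have "continuous_map (subtopology (X \<alpha>) S) (subtopology (sum_topology X I) (fst p)) (\<lambda>s. (\<alpha>, s))"
    using assms(2,3) continuous_map_component_injection[OF assms(2), of X]
    by (auto simp: continuous_map_in_subtopology continuous_map_from_subtopology)
  then show ?thesis
    using SrepD(4)[OF assms(1)] continuous_map_compose[unfolded o_def] by blast
qed

lemma sle_if_slices:
  assumes "p \<in> Srep (sum_topology X I)" "q \<in> Srep (sum_topology X I)"
    and "\<And>\<alpha>. \<alpha> \<in> I \<Longrightarrow> \<exists>V. dense_openin (X \<alpha>) V \<and>
        (\<forall>s\<in>V. (\<alpha>, s) \<in> fst p \<longrightarrow> (\<alpha>, s) \<in> fst q \<longrightarrow> snd p (\<alpha>, s) \<le> snd q (\<alpha>, s))"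
  shows "sle p q"
  unfolding sle_def
proof clarify
  fix \<alpha> t assume t: "(\<alpha>, t) \<in> fst p" "(\<alpha>, t) \<in> fst q"
  then have \<alpha>: "\<alpha> \<in> I"
    using SrepD(3)[OF assms(1)] by auto
  obtain V where V: "dense_openin (X \<alpha>) V"
    "\<forall>s\<in>V. (\<alpha>, s) \<in> fst p \<longrightarrow> (\<alpha>, s) \<in> fst q \<longrightarrow> snd p (\<alpha>, s) \<le> snd q (\<alpha>, s)"
    using assms(3)[OF \<alpha>] by blast
  have "openin (X \<alpha>) ({s. (\<alpha>, s) \<in> fst p} \<inter> {s. (\<alpha>, s) \<in> fst q})"
    using openin_slice[OF SrepD(2)[OF assms(1)] \<alpha>] openin_slice[OF SrepD(2)[OF assms(2)] \<alpha>] by blast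
  from le_if_le_on_dense[OF this _ _ V(1), of "\<lambda>s. snd p (\<alpha>, s)" "\<lambda>s. snd q (\<alpha>, s)"]
  show "snd p (\<alpha>, t) \<le> snd q (\<alpha>, t)"
    using V(2) t by (auto intro!: continuous_map_slice[OF assms(1) \<alpha>] continuous_map_slice[OF assms(2) \<alpha>])
qed

lemma sequiv_if_slices:
  assumes "p \<in> Srep (sum_topology X I)" "q \<in> Srep (sum_topology X I)"
    and "\<And>\<alpha>. \<alpha> \<in> I \<Longrightarrow> \<exists>V. dense_openin (X \<alpha>) V \<and>
        (\<forall>s\<in>V. (\<alpha>, s) \<in> fst p \<longrightarrow> (\<alpha>, s) \<in> fst q \<longrightarrow> snd p (\<alpha>, s) = snd q (\<alpha>, s))"
  shows "sequiv p q"
  unfolding sequiv_iff_sle using assms by (intro conjI sle_if_slices) (fastforce+)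

section \<open>Order convergence of nets\<close>

lemma evtl_mono: "evtl J r P \<Longrightarrow> (\<And>\<beta>. P \<beta> \<Longrightarrow> Q \<beta>) \<Longrightarrow> evtl J r Q"
  unfolding evtl_def by blast

lemma evtl_conj:
  assumes "directed_set J r" "evtl J r P" "evtl J r Q"
  shows "evtl J r (\<lambda>\<beta>. P \<beta> \<and> Q \<beta>)"
proof -
  obtain b1 b2 where "b1 \<in> J" "\<forall>\<beta>\<in>J. r b1 \<beta> \<longrightarrow> P \<beta>" "b2 \<in> J" "\<forall>\<beta>\<in>J. r b2 \<beta> \<longrightarrow> Q \<beta>"
    using assms(2,3) unfolding evtl_def by blast
  moreover obtain b3 where "b3 \<in> J" "r b1 b3" "r b2 b3"
    using assms(1) \<open>b1 \<in> J\<close> \<open>b2 \<in> J\<close> unfolding directed_set_def by blast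
  ultimately show ?thesis
    using assms(1) unfolding evtl_def directed_set_def by meson
qed

lemma oconv_genE:
  assumes "oconv_gen C le z dst J r x l"
  obtains D where "D \<subseteq> C" "D \<noteq> {}" "\<forall>d\<in>D. le z d" "\<forall>a\<in>D. \<forall>b\<in>D. \<exists>c\<in>D. le c a \<and> le c b"
    "\<forall>w\<in>C. (\<forall>d\<in>D. le w d) \<longrightarrow> le w z"
    "\<forall>d\<in>D. evtl J r (\<lambda>\<beta>. le (dst (x \<beta>) l) d)"
  using assms unfolding oconv_gen_def by blast

text \<open>The eventual upper bounds of the net serve as the dominating set: they are downward directed
  because J is.\<close>
lemma oconv_gen_if_eventual_bounds:
  assumes dir: "directed_set J r"
    and meet: "\<And>a b. a \<in> C \<Longrightarrow> b \<in> C \<Longrightarrow> mt a b \<in> C \<and> le (mt a b) a \<and> le (mt a b) b"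
    and meet_glb: "\<And>y a b. le y a \<Longrightarrow> le y b \<Longrightarrow> le y (mt a b)"
    and bounded: "bd \<in> C" "le z bd" "evtl J r (\<lambda>\<beta>. le (dst (x \<beta>) l) bd)"
    and inf_bounds: "\<And>w. w \<in> C \<Longrightarrow>
          (\<And>d. d \<in> C \<Longrightarrow> le z d \<Longrightarrow> evtl J r (\<lambda>\<beta>. le (dst (x \<beta>) l) d) \<Longrightarrow> le w d) \<Longrightarrow> le w z"
  shows "oconv_gen C le z dst J r x l"
  unfolding oconv_gen_def
proof (intro exI[of _ "{d \<in> C. le z d \<and> evtl J r (\<lambda>\<beta>. le (dst (x \<beta>) l) d)}"] conjI)
  let ?D = "{d \<in> C. le z d \<and> evtl J r (\<lambda>\<beta>. le (dst (x \<beta>) l) d)}"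
  show "\<forall>a\<in>?D. \<forall>b\<in>?D. \<exists>c\<in>?D. le c a \<and> le c b"
  proof (intro ballI)
    fix a b assume "a \<in> ?D" "b \<in> ?D"
    then have "evtl J r (\<lambda>\<beta>. le (dst (x \<beta>) l) (mt a b))"
      using evtl_conj[OF dir] by (blast intro: evtl_mono meet_glb)
    then show "\<exists>c\<in>?D. le c a \<and> le c b"
      using \<open>a \<in> ?D\<close> \<open>b \<in> ?D\<close> meet meet_glb by blast
  qed
qed (use bounded inf_bounds in auto)

section \<open>Band decompositions\<close>

locale band_decomposition =
  fixes I :: "'i set"
    and B :: "'i \<Rightarrow> 'e::{ordered_real_vector,lattice} set"
  assumes ideal: "\<And>\<alpha>. \<alpha> \<in> I \<Longrightarrow> is_ideal (B \<alpha>)"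
    and disjoint: "\<And>\<alpha> \<beta> a b. \<alpha> \<in> I \<Longrightarrow> \<beta> \<in> I \<Longrightarrow> \<alpha> \<noteq> \<beta> \<Longrightarrow> a \<in> B \<alpha> \<Longrightarrow> b \<in> B \<beta> \<Longrightarrow> vdisjoint a b"
    and decomposable: "\<And>x. \<exists>y. band_decomp I B x y"
begin

context
  fixes \<alpha> assumes \<alpha>: "\<alpha> \<in> I"
begin

lemma B_zero: "0 \<in> B \<alpha>"
  using ideal[OF \<alpha>] unfolding is_ideal_def by blast

lemma B_add: "a \<in> B \<alpha> \<Longrightarrow> b \<in> B \<alpha> \<Longrightarrow> a + b \<in> B \<alpha>"
  using ideal[OF \<alpha>] unfolding is_ideal_def by blast

lemma B_scaleR: "a \<in> B \<alpha> \<Longrightarrow> c *\<^sub>R a \<in> B \<alpha>"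
  using ideal[OF \<alpha>] unfolding is_ideal_def by blast

lemma B_solid: "a \<in> B \<alpha> \<Longrightarrow> vabs y \<le> vabs a \<Longrightarrow> y \<in> B \<alpha>"
  using ideal[OF \<alpha>] unfolding is_ideal_def by blast

lemma B_uminus: "a \<in> B \<alpha> \<Longrightarrow> - a \<in> B \<alpha>"
  using B_scaleR[of a "-1"] by simp

lemma B_diff: "a \<in> B \<alpha> \<Longrightarrow> b \<in> B \<alpha> \<Longrightarrow> a - b \<in> B \<alpha>"
  using B_add B_uminus by (metis diff_conv_add_uminus)

lemma B_vabs: "a \<in> B \<alpha> \<Longrightarrow> vabs a \<in> B \<alpha>"
  by (simp add: B_solid)

lemma B_vpos: "a \<in> B \<alpha> \<Longrightarrow> vpos a \<in> B \<alpha>"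
  by (metis B_solid vl.abs_of_nonneg vpos_le_vabs vpos_nonneg)

lemma B_inf: "a \<in> B \<alpha> \<Longrightarrow> b \<in> B \<alpha> \<Longrightarrow> inf a b \<in> B \<alpha>"
proof -
  assume ab: "a \<in> B \<alpha>" "b \<in> B \<alpha>"
  have "inf a b \<le> vabs a + vabs b"
    by (meson add_increasing2 inf.coboundedI1 vl.abs_ge_self vl.abs_ge_zero)
  moreover have "- inf a b \<le> vabs a + vabs b"
    unfolding vl.neg_inf_eq_sup
    by (meson add_increasing add_increasing2 le_sup_iff vl.abs_ge_minus_self vl.abs_ge_zero)
  ultimately
  have "vabs (inf a b) \<le> vabs (vabs a + vabs b)"
    by (simp add: vl.abs_add_abs vl.abs_leI)
  then show ?thesis
    using B_solid ab B_add B_vabs by blast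
qed

end

text \<open>Band parts are unique because the disjoint complement of B \<alpha> meets B \<alpha> only in 0.\<close>
definition disj_compl :: "'i \<Rightarrow> 'e set" where
  "disj_compl \<alpha> = {c. \<forall>z\<in>B \<alpha>. vdisjoint c z}"

lemma disj_compl_add:
  assumes "a \<in> disj_compl \<alpha>" "b \<in> disj_compl \<alpha>"
  shows "a + b \<in> disj_compl \<alpha>"
  unfolding disj_compl_def vdisjoint_def
proof safe
  fix z assume z: "z \<in> B \<alpha>"
  have "inf (vabs (a + b)) (vabs z) \<le> inf (vabs a + vabs b) (vabs z)"
    using vl.abs_triangle_ineq inf_mono by blast
  also have "\<dots> \<le> inf (vabs a) (vabs z) + inf (vabs b) (vabs z)"
    by (simp add: inf_add_le_add_inf)
  also have "\<dots> = 0"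
    using assms z unfolding disj_compl_def vdisjoint_def by simp
  finally show "inf (vabs (a + b)) (vabs z) = 0"
    by (simp add: order_antisym)
qed

lemma disj_compl_uminus: "a \<in> disj_compl \<alpha> \<Longrightarrow> - a \<in> disj_compl \<alpha>"
  unfolding disj_compl_def vdisjoint_def by simp

lemma disj_compl_diff: "a \<in> disj_compl \<alpha> \<Longrightarrow> b \<in> disj_compl \<alpha> \<Longrightarrow> a - b \<in> disj_compl \<alpha>"
  using disj_compl_add disj_compl_uminus by (metis diff_conv_add_uminus)

lemma B_disj_compl_eq_0:
  assumes "c \<in> B \<alpha>" "c \<in> disj_compl \<alpha>"
  shows "c = 0"
proof -
  have "inf (vabs c) (vabs c) = 0"
    using assms unfolding disj_compl_def vdisjoint_def by blast
  then show ?thesis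
    by simp
qed

lemma inf_sup_of_band_family:
  assumes \<alpha>: "\<alpha> \<in> I" and y: "\<forall>\<beta>\<in>I. y \<beta> \<in> B \<beta>" and sup: "is_sup_of ((\<lambda>\<beta>. f (y \<beta>)) ` I) s"
    and f: "\<And>a. 0 \<le> f a" "\<And>a. f a \<le> vabs a"
    and z: "z \<in> B \<alpha>" "0 \<le> z"
  shows "inf z s = inf z (f (y \<alpha>))"
proof -
  have other: "inf z (f (y \<beta>)) = 0" if "\<beta> \<in> I" "\<beta> \<noteq> \<alpha>" for \<beta>
  proof -
    have "vdisjoint z (y \<beta>)"
      using disjoint[OF \<alpha> that(1)] that z y by metis
    then have "inf z (vabs (y \<beta>)) = 0"
      using z(2) unfolding vdisjoint_def by (simp add: vl.abs_of_nonneg)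
    moreover have "inf z (f (y \<beta>)) \<le> inf z (vabs (y \<beta>))"
      using f by (meson inf_mono order_refl)
    ultimately show ?thesis
      using z f by (simp add: order_antisym)
  qed
  have "is_sup_of ((\<lambda>a. inf z a) ` ((\<lambda>\<beta>. f (y \<beta>)) ` I)) (inf z (f (y \<alpha>)))"
    unfolding is_sup_of_def
  proof safe
    fix \<beta> assume "\<beta> \<in> I"
    then show "inf z (f (y \<beta>)) \<le> inf z (f (y \<alpha>))"
      using other[of \<beta>] z f by (cases "\<beta> = \<alpha>") auto
  qed (use \<alpha> in blast)
  then show ?thesis
    using is_sup_of_unique is_sup_of_inf_left[OF sup] by blast
qed

lemma diff_in_disj_compl:
  assumes \<alpha>: "\<alpha> \<in> I" and p: "p \<in> B \<alpha>" "0 \<le> p" "p \<le> a"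
    and same_inf: "\<And>z. z \<in> B \<alpha> \<Longrightarrow> 0 \<le> z \<Longrightarrow> inf z a = inf z p"
  shows "a - p \<in> disj_compl \<alpha>"
  unfolding disj_compl_def vdisjoint_def
proof safe
  fix z assume z: "z \<in> B \<alpha>"
  define m where "m = inf (vabs (a - p)) (vabs z)"
  have m: "0 \<le> m" "m \<le> a - p" "m \<in> B \<alpha>"
    using B_solid[OF \<alpha> z, of m] p(3) unfolding m_def by (auto simp: vl.abs_of_nonneg)
  have "m + p \<in> B \<alpha>" "0 \<le> m + p"
    using B_add[OF \<alpha> m(3) p(1)] m(1) p(2) by auto
  then have "inf (m + p) a = p"
    using same_inf m(1) by (simp add: inf_absorb2)
  moreover have "inf (m + p) a = m + p"
    using m(2) by (simp add: inf_absorb1 le_diff_eq)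
  ultimately show "inf (vabs (a - p)) (vabs z) = 0"
    unfolding m_def by simp
qed

lemma band_decomp_diff_in_disj_compl:
  assumes \<alpha>: "\<alpha> \<in> I" and bd: "band_decomp I B x y"
  shows "x - y \<alpha> \<in> disj_compl \<alpha>"
proof -
  have y: "\<forall>\<beta>\<in>I. y \<beta> \<in> B \<beta>" and sups: "is_sup_of ((\<lambda>\<beta>. vpos (y \<beta>)) ` I) (vpos x)"
    "is_sup_of ((\<lambda>\<beta>. vpos (- y \<beta>)) ` I) (vpos (- x))"
    using bd unfolding band_decomp_def by (simp_all add: vpos_uminus)
  have "vpos (s x) - vpos (s (y \<alpha>)) \<in> disj_compl \<alpha>"
    if s: "s = id \<or> s = uminus" and sup: "is_sup_of ((\<lambda>\<beta>. vpos (s (y \<beta>))) ` I) (vpos (s x))" for s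
  proof (rule diff_in_disj_compl[OF \<alpha>])
    show "vpos (s (y \<alpha>)) \<in> B \<alpha>"
      using s y \<alpha> B_vpos B_uminus by auto
    show "vpos (s (y \<alpha>)) \<le> vpos (s x)"
      using sup \<alpha> unfolding is_sup_of_def by blast
    show "inf z (vpos (s x)) = inf z (vpos (s (y \<alpha>)))" if "z \<in> B \<alpha>" "0 \<le> z" for z
      using s y B_uminus that
      by (intro inf_sup_of_band_family[OF \<alpha>, of "\<lambda>\<beta>. s (y \<beta>)" vpos]) (auto simp: sup vpos_nonneg vpos_le_vabs)
  qed (rule vpos_nonneg)
  from disj_compl_diff[OF this[of id] this[of uminus]] sups
  have "(vpos x - vneg x) - (vpos (y \<alpha>) - vneg (y \<alpha>)) \<in> disj_compl \<alpha>"
    by (simp add: vpos_uminus algebra_simps)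
  then show ?thesis
    by (simp add: vpos_minus_vneg)
qed

lemma band_decomp_unique:
  assumes "\<alpha> \<in> I" "band_decomp I B x y" "band_decomp I B x y'"
  shows "y \<alpha> = y' \<alpha>"
proof -
  have "y' \<alpha> - y \<alpha> \<in> disj_compl \<alpha>"
    using disj_compl_diff[OF band_decomp_diff_in_disj_compl[OF assms(1,2)]
        band_decomp_diff_in_disj_compl[OF assms(1,3)]] by simp
  moreover have "y' \<alpha> - y \<alpha> \<in> B \<alpha>"
    using assms B_diff unfolding band_decomp_def by blast
  ultimately show ?thesis
    using B_disj_compl_eq_0 by fastforce
qed

definition band_part :: "'e \<Rightarrow> 'i \<Rightarrow> 'e" where
  "band_part x = (SOME y. band_decomp I B x y)"

lemma band_decomp_band_part: "band_decomp I B x (band_part x)"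
  unfolding band_part_def using decomposable by (rule someI_ex)

lemma band_part_eq: "\<alpha> \<in> I \<Longrightarrow> band_decomp I B x y \<Longrightarrow> band_part x \<alpha> = y \<alpha>"
  using band_decomp_unique band_decomp_band_part by blast

lemma band_part_in: "\<alpha> \<in> I \<Longrightarrow> band_part x \<alpha> \<in> B \<alpha>"
  using band_decomp_band_part unfolding band_decomp_def by blast

lemma band_part_add:
  assumes \<alpha>: "\<alpha> \<in> I"
  shows "band_part (x + x') \<alpha> = band_part x \<alpha> + band_part x' \<alpha>"
proof -
  let ?v = "band_part x \<alpha> + band_part x' \<alpha> - band_part (x + x') \<alpha>"
  have "?v = (x + x' - band_part (x + x') \<alpha>) - (x - band_part x \<alpha>) - (x' - band_part x' \<alpha>)"
    by (simp add: algebra_simps)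
  then have "?v \<in> disj_compl \<alpha>"
    using band_decomp_diff_in_disj_compl[OF \<alpha> band_decomp_band_part] disj_compl_diff by metis
  moreover have "?v \<in> B \<alpha>"
    using \<alpha> band_part_in B_add B_diff by blast
  ultimately show ?thesis
    using B_disj_compl_eq_0 by fastforce
qed

lemma band_part_uminus: "\<alpha> \<in> I \<Longrightarrow> band_part (- x) \<alpha> = - band_part x \<alpha>"
  using band_part_add[of \<alpha> x "- x"] band_part_add[of \<alpha> 0 0] by (simp add: add_eq_0_iff)

lemma band_part_diff: "\<alpha> \<in> I \<Longrightarrow> band_part (x - x') \<alpha> = band_part x \<alpha> - band_part x' \<alpha>"
  using band_part_add[of \<alpha> x "- x'"] band_part_uminus[of \<alpha> x'] by simp

lemma band_part_nonneg:
  assumes "\<alpha> \<in> I" "0 \<le> x"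
  shows "0 \<le> band_part x \<alpha>"
proof -
  have "vneg (band_part x \<alpha>) \<le> vneg x"
    using band_decomp_band_part assms(1) unfolding band_decomp_def is_sup_of_def by blast
  then show ?thesis
    using assms(2) vneg_nonneg by (metis nonneg_iff_vneg_eq_0 order_antisym)
qed

lemma band_part_mono: "\<alpha> \<in> I \<Longrightarrow> x \<le> x' \<Longrightarrow> band_part x \<alpha> \<le> band_part x' \<alpha>"
  using band_part_nonneg[of \<alpha> "x' - x"] band_part_diff[of \<alpha> x' x] by simp

lemma le_if_band_parts_le:
  assumes "\<And>\<alpha>. \<alpha> \<in> I \<Longrightarrow> band_part x \<alpha> \<le> band_part x' \<alpha>"
  shows "x \<le> x'"
proof -
  have "vneg (band_part (x' - x) \<alpha>) = 0" if "\<alpha> \<in> I" for \<alpha>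
    using assms[OF that] by (metis band_part_diff diff_ge_0_iff_ge nonneg_iff_vneg_eq_0 that)
  moreover have "is_sup_of ((\<lambda>\<alpha>. vneg (band_part (x' - x) \<alpha>)) ` I) (vneg (x' - x))"
    using band_decomp_band_part unfolding band_decomp_def by blast
  ultimately have "vneg (x' - x) \<le> 0"
    unfolding is_sup_of_def by auto
  then show ?thesis
    using vneg_nonneg[of "x' - x"] nonneg_iff_vneg_eq_0[of "x' - x"] by simp
qed

lemma band_part_of_B:
  assumes "\<alpha> \<in> I" "\<beta> \<in> I" "e \<in> B \<alpha>"
  shows "band_part e \<beta> = (if \<beta> = \<alpha> then e else 0)"
proof -
  have "band_decomp I B e (\<lambda>\<gamma>. if \<gamma> = \<alpha> then e else 0)"
    unfolding band_decomp_def is_sup_of_def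
    using assms B_zero by (auto simp: vpos_nonneg vneg_nonneg vpos_def[of 0] vneg_def[of 0])
  then show ?thesis
    using band_part_eq[OF assms(2)] by simp
qed

lemma band_part_vpos:
  assumes "\<alpha> \<in> I"
  shows "band_part (vpos x) \<alpha> = vpos (band_part x \<alpha>)"
proof -
  have "band_decomp I B (vpos x) (\<lambda>\<beta>. vpos (band_part x \<beta>))"
    using band_decomp_band_part[of x] B_vpos assms unfolding band_decomp_def
    by (auto simp: vpos_of_nonneg vneg_of_nonneg vpos_nonneg is_sup_of_def)
  then show ?thesis
    using band_part_eq[OF assms] by simp
qed

lemma band_part_vabs: "\<alpha> \<in> I \<Longrightarrow> band_part (vabs x) \<alpha> = vabs (band_part x \<alpha>)"
  by (simp add: vabs_eq_vpos_add_vneg band_part_add band_part_vpos band_part_uminus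
      flip: vpos_uminus)

lemma band_part_inf:
  assumes \<alpha>: "\<alpha> \<in> I" and "0 \<le> a" "0 \<le> b"
  shows "band_part (inf a b) \<alpha> = inf (band_part a \<alpha>) (band_part b \<alpha>)"
proof (rule antisym)
  show "band_part (inf a b) \<alpha> \<le> inf (band_part a \<alpha>) (band_part b \<alpha>)"
    using band_part_mono[OF \<alpha>] by simp
  define m where "m = inf (band_part a \<alpha>) (band_part b \<alpha>)"
  have m: "0 \<le> m" "m \<in> B \<alpha>"
    unfolding m_def using band_part_nonneg band_part_in B_inf \<alpha> assms by auto
  have same_inf: "inf m c = inf m (band_part c \<alpha>)" if "0 \<le> c" for c
    using inf_sup_of_band_family[OF \<alpha> _ _ vpos_nonneg vpos_le_vabs m(2,1), of "band_part c"]
      band_decomp_band_part[of c] band_part_nonneg[OF \<alpha> that] that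
    unfolding band_decomp_def by (simp add: vpos_of_nonneg)
  have "inf m a = m" "inf m b = m"
    using same_inf assms(2,3) unfolding m_def by (simp_all add: inf.absorb1)
  then have "inf m (inf a b) = m"
    by (metis inf.assoc)
  then have "inf m (band_part (inf a b) \<alpha>) = m"
    using same_inf[of "inf a b"] assms by simp
  then show "m \<le> band_part (inf a b) \<alpha>"
    by (metis inf.orderI)
qed

end

section \<open>The representation\<close>

locale wickstead_representation = band_decomposition I B
  for I :: "'i set" and B :: "'i \<Rightarrow> 'e::{ordered_real_vector,lattice} set" +
  fixes u :: "'i \<Rightarrow> 'e"
    and X :: "'i \<Rightarrow> 'x topology"
    and Ta :: "'i \<Rightarrow> 'e \<Rightarrow> 'x srep"
    and T :: "'e \<Rightarrow> ('i \<times> 'x) srep"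
  assumes weak_unit: "\<And>\<alpha>. \<alpha> \<in> I \<Longrightarrow> weak_unit_of (B \<alpha>) (u \<alpha>)"
    and compact_Hausdorff: "\<And>\<alpha>. \<alpha> \<in> I \<Longrightarrow> compact_space (X \<alpha>) \<and> Hausdorff_space (X \<alpha>)"
    and hom: "\<And>\<alpha>. \<alpha> \<in> I \<Longrightarrow> inj_lattice_hom_S (B \<alpha>) (X \<alpha>) (Ta \<alpha>)"
    and unit_one: "\<And>\<alpha>. \<alpha> \<in> I \<Longrightarrow> sequiv (Ta \<alpha> (u \<alpha>)) (sone (X \<alpha>))"
    and dense_range: "\<And>\<alpha>. \<alpha> \<in> I \<Longrightarrow>
          supnorm_closure_is_C (X \<alpha>) (Ta \<alpha>) (principal_ideal_in (B \<alpha>) (u \<alpha>))"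
    and T_Srep: "\<And>x. T x \<in> Srep (sum_topology X I)"
    and T_slices: "\<And>x y \<alpha>. band_decomp I B x y \<Longrightarrow> \<alpha> \<in> I \<Longrightarrow>
          sequiv (sslice \<alpha> (T x)) (Ta \<alpha> (y \<alpha>))"
begin

abbreviation SX :: "('i \<times> 'x) topology" where
  "SX \<equiv> sum_topology X I"

context
  fixes \<alpha> assumes \<alpha>: "\<alpha> \<in> I"
begin

lemma Ta_Srep: "a \<in> B \<alpha> \<Longrightarrow> Ta \<alpha> a \<in> Srep (X \<alpha>)"
  using hom[OF \<alpha>] unfolding inj_lattice_hom_S_def by simp

lemma dense_openin_Ta: "a \<in> B \<alpha> \<Longrightarrow> dense_openin (X \<alpha>) (fst (Ta \<alpha> a))"
  using Ta_Srep SrepD(1) by blast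

lemma Ta_add: "a \<in> B \<alpha> \<Longrightarrow> b \<in> B \<alpha> \<Longrightarrow> sequiv (Ta \<alpha> (a + b)) (splus (Ta \<alpha> a) (Ta \<alpha> b))"
  and Ta_scaleR: "a \<in> B \<alpha> \<Longrightarrow> sequiv (Ta \<alpha> (c *\<^sub>R a)) (sscale c (Ta \<alpha> a))"
  and Ta_sup: "a \<in> B \<alpha> \<Longrightarrow> b \<in> B \<alpha> \<Longrightarrow> sequiv (Ta \<alpha> (sup a b)) (ssup (Ta \<alpha> a) (Ta \<alpha> b))"
  and Ta_inf: "a \<in> B \<alpha> \<Longrightarrow> b \<in> B \<alpha> \<Longrightarrow> sequiv (Ta \<alpha> (inf a b)) (sinf (Ta \<alpha> a) (Ta \<alpha> b))"
  and Ta_inj: "a \<in> B \<alpha> \<Longrightarrow> b \<in> B \<alpha> \<Longrightarrow> sequiv (Ta \<alpha> a) (Ta \<alpha> b) \<Longrightarrow> a = b"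
  using hom[OF \<alpha>] unfolding inj_lattice_hom_S_def by simp_all

lemma Ta_add_pt:
  "\<lbrakk>a \<in> B \<alpha>; b \<in> B \<alpha>; t \<in> fst (Ta \<alpha> (a + b)); t \<in> fst (Ta \<alpha> a); t \<in> fst (Ta \<alpha> b)\<rbrakk>
   \<Longrightarrow> snd (Ta \<alpha> (a + b)) t = snd (Ta \<alpha> a) t + snd (Ta \<alpha> b) t"
  using Ta_add unfolding sequiv_def splus_def by auto

lemma Ta_scaleR_pt:
  "\<lbrakk>a \<in> B \<alpha>; t \<in> fst (Ta \<alpha> (c *\<^sub>R a)); t \<in> fst (Ta \<alpha> a)\<rbrakk>
   \<Longrightarrow> snd (Ta \<alpha> (c *\<^sub>R a)) t = c * snd (Ta \<alpha> a) t"
  using Ta_scaleR unfolding sequiv_def sscale_def by auto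

lemma Ta_sup_pt:
  "\<lbrakk>a \<in> B \<alpha>; b \<in> B \<alpha>; t \<in> fst (Ta \<alpha> (sup a b)); t \<in> fst (Ta \<alpha> a); t \<in> fst (Ta \<alpha> b)\<rbrakk>
   \<Longrightarrow> snd (Ta \<alpha> (sup a b)) t = max (snd (Ta \<alpha> a) t) (snd (Ta \<alpha> b) t)"
  using Ta_sup unfolding sequiv_def ssup_def by auto

lemma Ta_inf_pt:
  "\<lbrakk>a \<in> B \<alpha>; b \<in> B \<alpha>; t \<in> fst (Ta \<alpha> (inf a b)); t \<in> fst (Ta \<alpha> a); t \<in> fst (Ta \<alpha> b)\<rbrakk>
   \<Longrightarrow> snd (Ta \<alpha> (inf a b)) t = min (snd (Ta \<alpha> a) t) (snd (Ta \<alpha> b) t)"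
  using Ta_inf unfolding sequiv_def sinf_def by auto

lemma Ta_zero_pt: "t \<in> fst (Ta \<alpha> 0) \<Longrightarrow> snd (Ta \<alpha> 0) t = 0"
  using Ta_scaleR_pt[of 0 t 0] B_zero[OF \<alpha>] by simp

lemma Ta_uminus_pt:
  "\<lbrakk>a \<in> B \<alpha>; t \<in> fst (Ta \<alpha> (- a)); t \<in> fst (Ta \<alpha> a)\<rbrakk> \<Longrightarrow> snd (Ta \<alpha> (- a)) t = - snd (Ta \<alpha> a) t"
  using Ta_scaleR_pt[of a t "-1"] by simp

lemma Ta_diff_pt:
  "\<lbrakk>a \<in> B \<alpha>; b \<in> B \<alpha>; t \<in> fst (Ta \<alpha> (a - b)); t \<in> fst (Ta \<alpha> a); t \<in> fst (Ta \<alpha> b); t \<in> fst (Ta \<alpha> (- b))\<rbrakk>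
   \<Longrightarrow> snd (Ta \<alpha> (a - b)) t = snd (Ta \<alpha> a) t - snd (Ta \<alpha> b) t"
  using Ta_add_pt[of a "- b" t] Ta_uminus_pt[of b t] B_uminus[OF \<alpha>, of b] by simp

lemma Ta_vabs_pt:
  "\<lbrakk>a \<in> B \<alpha>; t \<in> fst (Ta \<alpha> (vabs a)); t \<in> fst (Ta \<alpha> (- a)); t \<in> fst (Ta \<alpha> a)\<rbrakk>
   \<Longrightarrow> snd (Ta \<alpha> (vabs a)) t = \<bar>snd (Ta \<alpha> a) t\<bar>"
  using Ta_sup_pt[of a "- a" t] Ta_uminus_pt[of a t] B_uminus[OF \<alpha>, of a] by (simp add: vabs_def)

lemma unit_in_B: "u \<alpha> \<in> B \<alpha>" and unit_nonneg: "0 \<le> u \<alpha>"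
  using weak_unit[OF \<alpha>] unfolding weak_unit_of_def by auto

lemma Ta_unit_pt: "t \<in> fst (Ta \<alpha> (u \<alpha>)) \<Longrightarrow> snd (Ta \<alpha> (u \<alpha>)) t = 1"
  using unit_one[OF \<alpha>] SrepD(3)[OF Ta_Srep[OF unit_in_B]] unfolding sequiv_def sone_def by auto

lemma Ta_mono: "\<lbrakk>a \<in> B \<alpha>; b \<in> B \<alpha>; a \<le> b\<rbrakk> \<Longrightarrow> sle (Ta \<alpha> a) (Ta \<alpha> b)"
  unfolding sle_def using Ta_sup_pt[of a b] by (metis IntD1 IntD2 max.cobounded1 sup_absorb2)

lemma Ta_reflect:
  assumes "a \<in> B \<alpha>" "b \<in> B \<alpha>" "sle (Ta \<alpha> a) (Ta \<alpha> b)"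
  shows "a \<le> b"
proof -
  have "inf a b \<in> B \<alpha>"
    using B_inf[OF \<alpha>] assms by blast
  moreover have "sequiv (Ta \<alpha> (inf a b)) (Ta \<alpha> a)"
    using assms Ta_inf_pt[OF assms(1,2)]
    by (intro sequiv_if_eq_on_dense[OF Ta_Srep[OF \<open>inf a b \<in> B \<alpha>\<close>] Ta_Srep dense_openin_Ta[of b]])
       (auto simp: sle_def)
  ultimately show ?thesis
    using Ta_inj assms by (metis inf.orderI)
qed

lemma Ta_nonneg_pt:
  assumes a: "a \<in> B \<alpha>" "0 \<le> a" and t: "t \<in> fst (Ta \<alpha> a)"
  shows "0 \<le> snd (Ta \<alpha> a) t"
proof (rule le_if_le_on_dense[OF SrepD(2)[OF Ta_Srep[OF a(1)]] _ SrepD(4)[OF Ta_Srep[OF a(1)]]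
      dense_openin_Ta[OF B_zero[OF \<alpha>]] _ t])
  show "\<forall>s\<in>fst (Ta \<alpha> a) \<inter> fst (Ta \<alpha> 0). 0 \<le> snd (Ta \<alpha> a) s"
    using Ta_mono[OF B_zero[OF \<alpha>] a] Ta_zero_pt unfolding sle_def by force
qed simp

end

lemma T_slice_pt:
  "\<lbrakk>\<alpha> \<in> I; (\<alpha>, t) \<in> fst (T x); t \<in> fst (Ta \<alpha> (band_part x \<alpha>))\<rbrakk>
   \<Longrightarrow> snd (T x) (\<alpha>, t) = snd (Ta \<alpha> (band_part x \<alpha>)) t"
  using T_slices[OF band_decomp_band_part] unfolding sequiv_def sslice_def by auto

lemma dense_openin_T: "dense_openin SX (fst (T x))"
  using SrepD(1)[OF T_Srep] .

lemma dense_openin_Ta_part: "\<alpha> \<in> I \<Longrightarrow> dense_openin (X \<alpha>) (fst (Ta \<alpha> (band_part x \<alpha>)))"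
  using dense_openin_Ta band_part_in by blast

lemma T_mono: "x \<le> x' \<Longrightarrow> sle (T x) (T x')"
proof (rule sle_if_slices[OF T_Srep T_Srep])
  fix \<alpha> assume \<alpha>: "\<alpha> \<in> I" and "x \<le> x'"
  then have "sle (Ta \<alpha> (band_part x \<alpha>)) (Ta \<alpha> (band_part x' \<alpha>))"
    by (intro Ta_mono band_part_in band_part_mono)
  then show "\<exists>V. dense_openin (X \<alpha>) V \<and> (\<forall>s\<in>V. (\<alpha>, s) \<in> fst (T x) \<longrightarrow> (\<alpha>, s) \<in> fst (T x') \<longrightarrow>
      snd (T x) (\<alpha>, s) \<le> snd (T x') (\<alpha>, s))"
    using \<alpha> by (intro exI[of _ "fst (Ta \<alpha> (band_part x \<alpha>)) \<inter> fst (Ta \<alpha> (band_part x' \<alpha>))"])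
       (auto simp: dense_openin_Int dense_openin_Ta_part T_slice_pt sle_def)
qed

lemma T_nonneg: "0 \<le> x \<Longrightarrow> sle (szero SX) (T x)"
proof (rule sle_if_slices[OF Srep_szero T_Srep])
  fix \<alpha> assume "\<alpha> \<in> I" "0 \<le> x"
  then show "\<exists>V. dense_openin (X \<alpha>) V \<and> (\<forall>s\<in>V. (\<alpha>, s) \<in> fst (szero SX) \<longrightarrow> (\<alpha>, s) \<in> fst (T x) \<longrightarrow>
      snd (szero SX) (\<alpha>, s) \<le> snd (T x) (\<alpha>, s))"
    by (intro exI[of _ "fst (Ta \<alpha> (band_part x \<alpha>))"])
       (auto simp: dense_openin_Ta_part T_slice_pt szero_def intro!: Ta_nonneg_pt band_part_in band_part_nonneg)
qed

lemma T_nonneg_pt: "0 \<le> x \<Longrightarrow> p \<in> fst (T x) \<Longrightarrow> 0 \<le> snd (T x) p"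
  using T_nonneg szero_sle_iff[OF T_Srep] by blast

lemma T_reflect: "sle (T x) (T x') \<Longrightarrow> x \<le> x'"
proof (rule le_if_band_parts_le)
  fix \<alpha> assume le: "sle (T x) (T x')" and \<alpha>: "\<alpha> \<in> I"
  have "dense_openin (X \<alpha>) ({s. (\<alpha>, s) \<in> fst (T x)} \<inter> {s. (\<alpha>, s) \<in> fst (T x')})"
    using dense_openin_Int dense_openin_slice[OF dense_openin_T \<alpha>] by blast
  from sle_if_le_on_dense[OF Ta_Srep Ta_Srep this]
  have "sle (Ta \<alpha> (band_part x \<alpha>)) (Ta \<alpha> (band_part x' \<alpha>))"
    using le \<alpha> by (auto simp: band_part_in T_slice_pt[symmetric] sle_def)
  then show "band_part x \<alpha> \<le> band_part x' \<alpha>"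
    using Ta_reflect \<alpha> band_part_in by blast
qed

lemma T_diff: "sequiv (T (a - b)) (sminus (T a) (T b))"
proof (rule sequiv_if_slices[OF T_Srep Srep_sminus[OF T_Srep T_Srep]])
  fix \<alpha> assume \<alpha>: "\<alpha> \<in> I"
  show "\<exists>V. dense_openin (X \<alpha>) V \<and> (\<forall>s\<in>V. (\<alpha>, s) \<in> fst (T (a - b)) \<longrightarrow> (\<alpha>, s) \<in> fst (sminus (T a) (T b)) \<longrightarrow>
      snd (T (a - b)) (\<alpha>, s) = snd (sminus (T a) (T b)) (\<alpha>, s))"
    by (rule exI[of _ "fst (Ta \<alpha> (band_part (a - b) \<alpha>)) \<inter> fst (Ta \<alpha> (band_part a \<alpha>))
        \<inter> fst (Ta \<alpha> (band_part b \<alpha>)) \<inter> fst (Ta \<alpha> (- band_part b \<alpha>))"])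
       (use \<alpha> in \<open>auto simp: sminus_def T_slice_pt band_part_diff
          intro!: Ta_diff_pt dense_openin_Int dense_openin_Ta B_uminus B_diff band_part_in\<close>)
qed

lemma T_vabs: "sequiv (T (vabs a)) (sabs (T a))"
proof (rule sequiv_if_slices[OF T_Srep Srep_sabs[OF T_Srep]])
  fix \<alpha> assume \<alpha>: "\<alpha> \<in> I"
  show "\<exists>V. dense_openin (X \<alpha>) V \<and> (\<forall>s\<in>V. (\<alpha>, s) \<in> fst (T (vabs a)) \<longrightarrow> (\<alpha>, s) \<in> fst (sabs (T a)) \<longrightarrow>
      snd (T (vabs a)) (\<alpha>, s) = snd (sabs (T a)) (\<alpha>, s))"
    by (rule exI[of _ "fst (Ta \<alpha> (band_part (vabs a) \<alpha>)) \<inter> fst (Ta \<alpha> (band_part a \<alpha>))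
        \<inter> fst (Ta \<alpha> (- band_part a \<alpha>))"])
       (use \<alpha> in \<open>auto simp: sabs_def T_slice_pt band_part_vabs
          intro!: Ta_vabs_pt dense_openin_Int dense_openin_Ta B_uminus band_part_in B_vabs\<close>)
qed

lemma T_inf:
  assumes "0 \<le> a" "0 \<le> b"
  shows "sequiv (T (inf a b)) (sinf (T a) (T b))"
proof (rule sequiv_if_slices[OF T_Srep Srep_sinf[OF T_Srep T_Srep]])
  fix \<alpha> assume \<alpha>: "\<alpha> \<in> I"
  show "\<exists>V. dense_openin (X \<alpha>) V \<and> (\<forall>s\<in>V. (\<alpha>, s) \<in> fst (T (inf a b)) \<longrightarrow> (\<alpha>, s) \<in> fst (sinf (T a) (T b)) \<longrightarrow>
      snd (T (inf a b)) (\<alpha>, s) = snd (sinf (T a) (T b)) (\<alpha>, s))"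
    by (rule exI[of _ "fst (Ta \<alpha> (band_part (inf a b) \<alpha>)) \<inter> fst (Ta \<alpha> (band_part a \<alpha>))
        \<inter> fst (Ta \<alpha> (band_part b \<alpha>))"])
       (use \<alpha> assms in \<open>auto simp: sinf_def T_slice_pt band_part_inf
          intro!: Ta_inf_pt dense_openin_Int dense_openin_Ta band_part_in B_inf\<close>)
qed

lemma T_diff_pt: "\<lbrakk>p \<in> fst (T (a - b)); p \<in> fst (T a); p \<in> fst (T b)\<rbrakk>
   \<Longrightarrow> snd (T (a - b)) p = snd (T a) p - snd (T b) p"
  using T_diff[of a b] unfolding sequiv_def sminus_def by auto

lemma T_vabs_pt: "\<lbrakk>p \<in> fst (T (vabs a)); p \<in> fst (T a)\<rbrakk> \<Longrightarrow> snd (T (vabs a)) p = \<bar>snd (T a) p\<bar>"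
  using T_vabs[of a] unfolding sequiv_def sabs_def by auto

lemma T_inf_pt: "\<lbrakk>0 \<le> a; 0 \<le> b; p \<in> fst (T (inf a b)); p \<in> fst (T a); p \<in> fst (T b)\<rbrakk>
   \<Longrightarrow> snd (T (inf a b)) p = min (snd (T a) p) (snd (T b) p)"
  using T_inf[of a b] unfolding sequiv_def sinf_def by auto

lemma T_zero_pt: "p \<in> fst (T 0) \<Longrightarrow> snd (T 0) p = 0"
  using T_diff_pt[of p 0 0] by simp

lemma T_nonpos: "sle (T x) (szero SX) \<Longrightarrow> x \<le> 0"
  using T_zero_pt unfolding sle_szero_iff[OF T_Srep] by (intro T_reflect) (auto simp: sle_def)

section \<open>Order density of the range of T\<close>

lemma Ta_shifted_vpos_pt:
  assumes \<alpha>: "\<alpha> \<in> I" and y: "y \<in> B \<alpha>" "sequiv (Ta \<alpha> y) (topspace (X \<alpha>), h)"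
    and h: "continuous_map (X \<alpha>) euclideanreal h"
    and s: "s \<in> fst (Ta \<alpha> (vpos (y - c *\<^sub>R u \<alpha>)))"
  shows "snd (Ta \<alpha> (vpos (y - c *\<^sub>R u \<alpha>))) s = max (h s - c) 0"
proof -
  let ?e = "vpos (y - c *\<^sub>R u \<alpha>)" and ?k = "\<lambda>s. max (h s - c) 0"
  have B: "c *\<^sub>R u \<alpha> \<in> B \<alpha>" "y - c *\<^sub>R u \<alpha> \<in> B \<alpha>" "?e \<in> B \<alpha>"
    using y B_scaleR B_diff B_vpos \<alpha> unit_in_B by auto
  have k: "continuous_map (X \<alpha>) euclideanreal ?k"
    using h by (intro continuous_map_real_max continuous_map_diff) auto
  let ?V = "fst (Ta \<alpha> y) \<inter> fst (Ta \<alpha> (c *\<^sub>R u \<alpha>)) \<inter> fst (Ta \<alpha> (u \<alpha>))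
    \<inter> fst (Ta \<alpha> (y - c *\<^sub>R u \<alpha>)) \<inter> fst (Ta \<alpha> (- (c *\<^sub>R u \<alpha>))) \<inter> fst (Ta \<alpha> 0)"
  have "sequiv (Ta \<alpha> ?e) (topspace (X \<alpha>), ?k)"
  proof (rule sequiv_if_eq_on_dense[OF Ta_Srep[OF \<alpha> B(3)] Srep_continuous_map[OF k]])
    show "dense_openin (X \<alpha>) ?V"
      using \<alpha> y B unit_in_B B_zero B_uminus by (intro dense_openin_Int dense_openin_Ta) auto
    show "\<forall>t\<in>fst (Ta \<alpha> ?e) \<inter> fst (topspace (X \<alpha>), ?k) \<inter> ?V. snd (Ta \<alpha> ?e) t = snd (topspace (X \<alpha>), ?k) t"
    proof
      fix t assume t: "t \<in> fst (Ta \<alpha> ?e) \<inter> fst (topspace (X \<alpha>), ?k) \<inter> ?V"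
      have "snd (Ta \<alpha> (c *\<^sub>R u \<alpha>)) t = c"
        using t Ta_scaleR_pt[OF \<alpha> unit_in_B[OF \<alpha>]] Ta_unit_pt[OF \<alpha>] by simp
      moreover have "snd (Ta \<alpha> y) t = h t"
        using y(2) t unfolding sequiv_def by auto
      ultimately have "snd (Ta \<alpha> (y - c *\<^sub>R u \<alpha>)) t = h t - c"
        using t Ta_diff_pt[OF \<alpha> y(1) B(1)] by simp
      then show "snd (Ta \<alpha> ?e) t = snd (topspace (X \<alpha>), ?k) t"
        using t Ta_sup_pt[OF \<alpha> B(2) B_zero[OF \<alpha>]] Ta_zero_pt[OF \<alpha>] unfolding vpos_def by simp
    qed
  qed
  then show ?thesis
    using s SrepD(3)[OF Ta_Srep[OF \<alpha> B(3)]] unfolding sequiv_def by auto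
qed

lemma Ta_approx_below:
  assumes \<alpha>: "\<alpha> \<in> I" and g: "continuous_map (X \<alpha>) euclideanreal g" "\<And>s. s \<in> topspace (X \<alpha>) \<Longrightarrow> 0 \<le> g s"
    and \<epsilon>: "0 < \<epsilon>"
  obtains e k where "e \<in> B \<alpha>" "0 \<le> e" "continuous_map (X \<alpha>) euclideanreal k"
    "\<And>s. s \<in> fst (Ta \<alpha> e) \<Longrightarrow> snd (Ta \<alpha> e) s = k s"
    "\<And>s. s \<in> topspace (X \<alpha>) \<Longrightarrow> k s \<le> g s \<and> g s - \<epsilon> < k s"
proof -
  define \<delta> where "\<delta> = \<epsilon> / 3"
  obtain y h where y: "y \<in> principal_ideal_in (B \<alpha>) (u \<alpha>)" and h: "continuous_map (X \<alpha>) euclideanreal h"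
    and yh: "sequiv (Ta \<alpha> y) (topspace (X \<alpha>), h)" and approx: "\<forall>s\<in>topspace (X \<alpha>). \<bar>g s - h s\<bar> \<le> \<delta>"
    using dense_range[OF \<alpha>] g(1) \<epsilon> unfolding supnorm_closure_is_C_def \<delta>_def
    by (metis divide_pos_pos zero_less_numeral)
  have y: "y \<in> B \<alpha>"
    using y unfolding principal_ideal_in_def by blast
  txt \<open>Shifting down by \<delta> and truncating at 0 turns the uniform approximation into a minorant.\<close>
  define k where "k = (\<lambda>s. max (h s - \<delta>) 0)"
  have bound: "k s \<le> g s \<and> g s - \<epsilon> < k s" if "s \<in> topspace (X \<alpha>)" for s
  proof -
    have "h s - \<delta> \<le> g s" "g s - \<epsilon> < h s - \<delta>"
      using approx that \<epsilon> unfolding \<delta>_def abs_le_iff by force+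
    then show ?thesis
      using g(2)[OF that] unfolding k_def by simp
  qed
  show ?thesis
  proof (rule that[OF _ vpos_nonneg _ _ bound])
    show "vpos (y - \<delta> *\<^sub>R u \<alpha>) \<in> B \<alpha>"
      using \<alpha> y unit_in_B by (intro B_vpos B_diff B_scaleR)
    show "continuous_map (X \<alpha>) euclideanreal k"
      unfolding k_def using h by (intro continuous_map_real_max continuous_map_diff) auto
    show "snd (Ta \<alpha> (vpos (y - \<delta> *\<^sub>R u \<alpha>))) s = k s" if "s \<in> fst (Ta \<alpha> (vpos (y - \<delta> *\<^sub>R u \<alpha>)))" for s
      using Ta_shifted_vpos_pt[OF \<alpha> y yh h that] by (simp add: k_def)
  qed
qed

lemma T_band_element_sle:
  assumes \<alpha>: "\<alpha> \<in> I" and e: "e \<in> B \<alpha>" and h: "h \<in> Srep SX" "sle (szero SX) h"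
    and le: "\<And>s. s \<in> fst (Ta \<alpha> e) \<Longrightarrow> (\<alpha>, s) \<in> fst h \<Longrightarrow> snd (Ta \<alpha> e) s \<le> snd h (\<alpha>, s)"
  shows "sle (T e) h"
proof (rule sle_if_slices[OF T_Srep h(1)])
  fix \<beta> assume \<beta>: "\<beta> \<in> I"
  have "snd (T e) (\<beta>, s) \<le> snd h (\<beta>, s)"
    if "s \<in> fst (Ta \<beta> (band_part e \<beta>))" "(\<beta>, s) \<in> fst (T e)" "(\<beta>, s) \<in> fst h" for s
    using that T_slice_pt[OF \<beta>] band_part_of_B[OF \<alpha> \<beta> e] le Ta_zero_pt[OF \<beta>] h
    by (cases "\<beta> = \<alpha>") (auto simp: szero_sle_iff)
  then show "\<exists>V. dense_openin (X \<beta>) V \<and> (\<forall>s\<in>V. (\<beta>, s) \<in> fst (T e) \<longrightarrow> (\<beta>, s) \<in> fst h \<longrightarrow>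
      snd (T e) (\<beta>, s) \<le> snd h (\<beta>, s))"
    using dense_openin_Ta_part[OF \<beta>] by blast
qed

lemma T_bump_below:
  assumes h: "h \<in> Srep SX" "sle (szero SX) h" and t: "(\<alpha>, t) \<in> fst h" and \<eta>: "0 < \<eta>"
  obtains e k where "e \<in> B \<alpha>" "0 \<le> e" "continuous_map (X \<alpha>) euclideanreal k"
    "\<And>s. s \<in> fst (Ta \<alpha> e) \<Longrightarrow> snd (Ta \<alpha> e) s = k s" "sle (T e) h" "snd h (\<alpha>, t) - \<eta> < k t"
proof -
  have \<alpha>: "\<alpha> \<in> I" and t_top: "t \<in> topspace (X \<alpha>)"
    using t SrepD(3)[OF h(1)] by auto
  let ?U = "{s. (\<alpha>, s) \<in> fst h}"
  have "\<And>s. s \<in> ?U \<Longrightarrow> 0 \<le> snd h (\<alpha>, s)" "0 < \<eta> / 2"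
    using h \<eta> by (simp_all add: szero_sle_iff)
  then obtain g where g: "continuous_map (X \<alpha>) euclideanreal g" "\<And>s. s \<in> topspace (X \<alpha>) \<Longrightarrow> 0 \<le> g s"
    "\<And>s. s \<in> ?U \<Longrightarrow> g s \<le> snd h (\<alpha>, s)" "snd h (\<alpha>, t) - \<eta> / 2 < g t"
    using continuous_minorant_bump[OF _ _ openin_slice[OF SrepD(2)[OF h(1)] \<alpha>]
        continuous_map_slice[OF h(1) \<alpha> order_refl], of t "\<eta> / 2"] compact_Hausdorff[OF \<alpha>] t
    by blast
  obtain e k where e: "e \<in> B \<alpha>" "0 \<le> e" and k: "continuous_map (X \<alpha>) euclideanreal k"
    "\<And>s. s \<in> fst (Ta \<alpha> e) \<Longrightarrow> snd (Ta \<alpha> e) s = k s"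
    "\<And>s. s \<in> topspace (X \<alpha>) \<Longrightarrow> k s \<le> g s \<and> g s - \<eta> / 2 < k s"
    using Ta_approx_below[OF \<alpha> g(1,2) \<open>0 < \<eta> / 2\<close>] by blast
  have "sle (T e) h"
  proof (rule T_band_element_sle[OF \<alpha> e(1) h])
    fix s assume "s \<in> fst (Ta \<alpha> e)" "(\<alpha>, s) \<in> fst h"
    moreover from this have "s \<in> topspace (X \<alpha>)"
      using SrepD(3)[OF h(1)] by auto
    ultimately show "snd (Ta \<alpha> e) s \<le> snd h (\<alpha>, s)"
      using k(2,3) g(3) by force
  qed
  moreover have "snd h (\<alpha>, t) - \<eta> < k t"
    using g(4) k(3)[OF t_top] by linarith
  ultimately show ?thesis
    using that e k by blast
qed

lemma le_slice_if_T_band_element_sle: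
  assumes \<alpha>: "\<alpha> \<in> I" and e: "e \<in> B \<alpha>" and k: "continuous_map (X \<alpha>) euclideanreal k"
    "\<And>s. s \<in> fst (Ta \<alpha> e) \<Longrightarrow> snd (Ta \<alpha> e) s = k s"
    and w: "w \<in> Srep SX" "sle (T e) w" and t: "(\<alpha>, t) \<in> fst w"
  shows "k t \<le> snd w (\<alpha>, t)"
proof (rule le_if_le_on_dense[where U = "{s. (\<alpha>, s) \<in> fst w}"
      and V = "fst (Ta \<alpha> e) \<inter> {s. (\<alpha>, s) \<in> fst (T e)}"])
  show "openin (X \<alpha>) {s. (\<alpha>, s) \<in> fst w}"
    using openin_slice[OF SrepD(2)[OF w(1)] \<alpha>] .
  show "dense_openin (X \<alpha>) (fst (Ta \<alpha> e) \<inter> {s. (\<alpha>, s) \<in> fst (T e)})"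
    using dense_openin_Int dense_openin_Ta[OF \<alpha> e] dense_openin_slice[OF dense_openin_T \<alpha>] by blast
  show "continuous_map (subtopology (X \<alpha>) {s. (\<alpha>, s) \<in> fst w}) euclideanreal (\<lambda>s. snd w (\<alpha>, s))"
    by (rule continuous_map_slice[OF w(1) \<alpha>]) auto
  show "\<forall>s\<in>{s. (\<alpha>, s) \<in> fst w} \<inter> (fst (Ta \<alpha> e) \<inter> {s. (\<alpha>, s) \<in> fst (T e)}). k s \<le> snd w (\<alpha>, s)"
  proof
    fix s assume s: "s \<in> {s. (\<alpha>, s) \<in> fst w} \<inter> (fst (Ta \<alpha> e) \<inter> {s. (\<alpha>, s) \<in> fst (T e)})"
    then have "k s = snd (T e) (\<alpha>, s)"
      using k(2) T_slice_pt[OF \<alpha>, of s e] band_part_of_B[OF \<alpha> \<alpha> e] by simp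
    then show "k s \<le> snd w (\<alpha>, s)"
      using sleD[OF w(2)] s by auto
  qed
qed (use k(1) t in \<open>auto intro: continuous_map_from_subtopology\<close>)

lemma sle_if_T_minorants_sle:
  assumes h: "h \<in> Srep SX" "sle (szero SX) h" and w: "w \<in> Srep SX"
    and minorants: "\<And>f. 0 \<le> f \<Longrightarrow> sle (T f) h \<Longrightarrow> sle (T f) w"
  shows "sle h w"
proof (rule ccontr)
  assume "\<not> sle h w"
  then obtain \<alpha> t where t: "(\<alpha>, t) \<in> fst h" "(\<alpha>, t) \<in> fst w" "snd w (\<alpha>, t) < snd h (\<alpha>, t)"
    unfolding sle_def by fastforce
  then have \<alpha>: "\<alpha> \<in> I"
    using SrepD(3)[OF h(1)] by auto
  obtain e k where e: "e \<in> B \<alpha>" "0 \<le> e" and k: "continuous_map (X \<alpha>) euclideanreal k"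
    "\<And>s. s \<in> fst (Ta \<alpha> e) \<Longrightarrow> snd (Ta \<alpha> e) s = k s"
    and below: "sle (T e) h" and near: "snd h (\<alpha>, t) - (snd h (\<alpha>, t) - snd w (\<alpha>, t)) < k t"
    using T_bump_below[OF h t(1), of "snd h (\<alpha>, t) - snd w (\<alpha>, t)"] t(3) by auto
  have "k t \<le> snd w (\<alpha>, t)"
    using le_slice_if_T_band_element_sle[OF \<alpha> e(1) k w minorants[OF e(2) below] t(2)] .
  then show False
    using near by simp
qed

section \<open>Continuity of T and of its inverse\<close>

lemma T_sle_szero: "x \<le> 0 \<Longrightarrow> sle (T x) (szero SX)"
  using T_mono[of x 0] T_zero_pt
  by (intro sle_if_le_on_dense[OF T_Srep Srep_szero dense_openin_T[of 0]]) (auto simp: sle_def szero_def)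

lemma sle_szero_if_sle_T_null:
  assumes D: "\<And>d. d \<in> D \<Longrightarrow> 0 \<le> d" "\<And>l. (\<And>d. d \<in> D \<Longrightarrow> l \<le> d) \<Longrightarrow> l \<le> 0"
    and w: "w \<in> Srep SX" "\<And>d. d \<in> D \<Longrightarrow> sle w (T d)"
  shows "sle w (szero SX)"
proof -
  let ?h = "ssup w (szero SX)"
  have h: "?h \<in> Srep SX" "sle (szero SX) ?h"
    using Srep_ssup[OF w(1) Srep_szero] by (auto simp: sle_def ssup_def szero_def)
  have h_le: "sle ?h (T d)" if "d \<in> D" for d
    using sleD[OF w(2)[OF that]] T_nonneg_pt[OF D(1)[OF that]] by (auto simp: sle_def ssup_def szero_def)
  have "sle ?h (szero SX)"
  proof (rule sle_if_T_minorants_sle[OF h Srep_szero])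
    fix f assume f: "0 \<le> f" "sle (T f) ?h"
    have "f \<le> d" if "d \<in> D" for d
      using sle_trans[OF T_Srep h(1) T_Srep f(2) h_le[OF that]] by (rule T_reflect)
    then show "sle (T f) (szero SX)"
      using D(2) T_sle_szero by blast
  qed
  then have "\<forall>t\<in>fst ?h. snd ?h t \<le> 0"
    using sle_szero_iff[OF h(1)] by blast
  then show ?thesis
    unfolding sle_szero_iff[OF w(1)] using SrepD(3)[OF w(1)] by (auto simp: ssup_def szero_def)
qed

lemma sabs_T_sle:
  assumes "vabs x \<le> d"
  shows "sle (sabs (sminus (T x) (szero SX))) (T d)"
proof (rule sle_if_le_on_dense[OF Srep_sabs[OF Srep_sminus[OF T_Srep Srep_szero]] T_Srep
      dense_openin_T[of "vabs x"]], intro ballI)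
  fix p assume p: "p \<in> fst (sabs (sminus (T x) (szero SX))) \<inter> fst (T d) \<inter> fst (T (vabs x))"
  then have "snd (T (vabs x)) p \<le> snd (T d) p"
    using sleD[OF T_mono[OF assms]] by blast
  then show "snd (sabs (sminus (T x) (szero SX))) p \<le> snd (T d) p"
    using p T_vabs_pt[of p x] by (simp add: sabs_def sminus_def szero_def)
qed

theorem T_order_continuous:
  assumes "oconvE J r xs 0"
  shows "oconvS SX J r (\<lambda>\<beta>. T (xs \<beta>)) (szero SX)"
proof -
  obtain D where D: "D \<subseteq> UNIV" "D \<noteq> {}" "\<forall>d\<in>D. 0 \<le> d" "\<forall>a\<in>D. \<forall>b\<in>D. \<exists>c\<in>D. c \<le> a \<and> c \<le> b"
    "\<forall>l\<in>UNIV. (\<forall>d\<in>D. l \<le> d) \<longrightarrow> l \<le> 0" "\<forall>d\<in>D. evtl J r (\<lambda>\<beta>. vabs (xs \<beta> - 0) \<le> d)"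
    using assms unfolding oconvE_def by (rule oconv_genE)
  show ?thesis
    unfolding oconvS_def oconv_gen_def
  proof (intro exI[of _ "T ` D"] conjI)
    show "\<forall>w\<in>Srep SX. (\<forall>d\<in>T ` D. sle w d) \<longrightarrow> sle w (szero SX)"
      using D(3,5) by (auto intro: sle_szero_if_sle_T_null[of D])
    show "\<forall>d\<in>T ` D. evtl J r (\<lambda>\<beta>. sle (sabs (sminus (T (xs \<beta>)) (szero SX))) d)"
      using D(6) sabs_T_sle by (auto elim!: evtl_mono)
    show "T ` D \<subseteq> Srep SX" "T ` D \<noteq> {}" "\<forall>d\<in>T ` D. sle (szero SX) d"
      using D(2,3) T_Srep T_nonneg by auto
    show "\<forall>a\<in>T ` D. \<forall>b\<in>T ` D. \<exists>c\<in>T ` D. sle c a \<and> sle c b"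
    proof (intro ballI)
      fix a b assume "a \<in> T ` D" "b \<in> T ` D"
      then obtain a' b' c where "a = T a'" "b = T b'" "c \<in> D" "c \<le> a'" "c \<le> b'"
        using D(4) by blast
      then show "\<exists>c\<in>T ` D. sle c a \<and> sle c b"
        using T_mono by blast
    qed
  qed
qed

lemma T_scaled_unit_pt:
  assumes \<alpha>: "\<alpha> \<in> I" and s: "(\<alpha>, s) \<in> fst (T (c *\<^sub>R u \<alpha>))" "s \<in> fst (Ta \<alpha> (c *\<^sub>R u \<alpha>))"
    "s \<in> fst (Ta \<alpha> (u \<alpha>))"
  shows "snd (T (c *\<^sub>R u \<alpha>)) (\<alpha>, s) = c"
proof -
  have "band_part (c *\<^sub>R u \<alpha>) \<alpha> = c *\<^sub>R u \<alpha>"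
    using band_part_of_B[OF \<alpha> \<alpha> B_scaleR[OF \<alpha> unit_in_B[OF \<alpha>]]] by simp
  then show ?thesis
    using T_slice_pt[OF \<alpha> s(1)] s Ta_scaleR_pt[OF \<alpha> unit_in_B[OF \<alpha>]] Ta_unit_pt[OF \<alpha>] by simp
qed

lemma truncated_distance_sle:
  assumes v: "0 \<le> v" and w: "w \<in> Srep SX" "sle (szero SX) w" and d: "inf (vabs (a - b)) v \<le> d"
  shows "sle (sabs (sminus (sinf (sabs (sminus (T a) (T b))) w) (szero SX)))
             (splus (T d) (sminus w (sinf w (T v))))"
proof (rule sle_if_le_on_dense)
  show "sabs (sminus (sinf (sabs (sminus (T a) (T b))) w) (szero SX)) \<in> Srep SX"
    by (intro Srep_sabs Srep_sminus Srep_sinf T_Srep w Srep_szero)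
  show "splus (T d) (sminus w (sinf w (T v))) \<in> Srep SX"
    by (intro Srep_splus Srep_sminus Srep_sinf T_Srep w)
  let ?m = "inf (vabs (a - b)) v"
  let ?V = "fst (T a) \<inter> fst (T b) \<inter> fst (T (a - b)) \<inter> fst (T (vabs (a - b))) \<inter> fst (T ?m)"
  show "dense_openin SX ?V"
    by (intro dense_openin_Int dense_openin_T)
  show "\<forall>t\<in>fst (sabs (sminus (sinf (sabs (sminus (T a) (T b))) w) (szero SX))) \<inter>
          fst (splus (T d) (sminus w (sinf w (T v)))) \<inter> ?V.
        snd (sabs (sminus (sinf (sabs (sminus (T a) (T b))) w) (szero SX))) t
        \<le> snd (splus (T d) (sminus w (sinf w (T v)))) t"
  proof
    fix t assume t: "t \<in> fst (sabs (sminus (sinf (sabs (sminus (T a) (T b))) w) (szero SX))) \<inter>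
          fst (splus (T d) (sminus w (sinf w (T v)))) \<inter> ?V"
    then have "t \<in> fst w" "t \<in> fst (T v)" "t \<in> fst (T d)"
      by (auto simp: sabs_def sminus_def sinf_def splus_def)
    have t': "t \<in> fst (T a)" "t \<in> fst (T b)" "t \<in> fst (T (a - b))" "t \<in> fst (T (vabs (a - b)))"
      "t \<in> fst (T ?m)"
      using t by auto
    define A where "A = \<bar>snd (T a) t - snd (T b) t\<bar>"
    define W where "W = snd w t"
    define N where "N = snd (T v) t"
    have "A = snd (T (vabs (a - b))) t"
      using T_vabs_pt[OF t'(4,3)] T_diff_pt[OF t'(3,1,2)] by (simp add: A_def)
    then have "min A N = snd (T ?m) t"
      using T_inf_pt[OF vl.abs_ge_zero v t'(5,4) \<open>t \<in> fst (T v)\<close>] by (simp add: N_def)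
    also have "\<dots> \<le> snd (T d) t"
      using sleD[OF T_mono[OF d] t'(5) \<open>t \<in> fst (T d)\<close>] .
    finally have "min A W \<le> snd (T d) t + (W - min W N)"
      by (auto simp: min_def split: if_splits)
    moreover have "0 \<le> W"
      using w \<open>t \<in> fst w\<close> by (simp add: W_def szero_sle_iff)
    ultimately show "snd (sabs (sminus (sinf (sabs (sminus (T a) (T b))) w) (szero SX))) t
        \<le> snd (splus (T d) (sminus w (sinf w (T v)))) t"
      by (simp add: A_def W_def N_def sabs_def sminus_def sinf_def splus_def szero_def)
  qed
qed

lemma sle_truncation_if_uo_lower_bound:
  assumes uo: "uoconvE J r xs x" and v: "0 \<le> v" and w: "w \<in> Srep SX" "sle (szero SX) w"
    and l: "l \<in> Srep SX"
    and lower: "\<And>d. d \<in> Srep SX \<Longrightarrow> sle (szero SX) d \<Longrightarrow>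
      evtl J r (\<lambda>\<beta>. sle (sabs (sminus (sinf (sabs (sminus (T (xs \<beta>)) (T x))) w) (szero SX))) d) \<Longrightarrow> sle l d"
  shows "sle l (sminus w (sinf w (T v)))"
proof -
  let ?c = "sminus w (sinf w (T v))"
  have c: "?c \<in> Srep SX" "sle (szero SX) ?c"
    using Srep_sminus[OF w(1) Srep_sinf[OF w(1) T_Srep]] by (auto simp: sle_def sminus_def sinf_def szero_def)
  have "oconv_gen UNIV (\<le>) 0 (\<lambda>a b. vabs (a - b)) J r (\<lambda>\<beta>. inf (vabs (xs \<beta> - x)) v) 0"
    using uo v unfolding uoconvE_def uoconv_gen_def by blast
  then obtain D where D: "D \<subseteq> UNIV" "D \<noteq> {}" "\<forall>d\<in>D. 0 \<le> d" "\<forall>a\<in>D. \<forall>b\<in>D. \<exists>c\<in>D. c \<le> a \<and> c \<le> b"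
    "\<forall>l\<in>UNIV. (\<forall>d\<in>D. l \<le> d) \<longrightarrow> l \<le> 0"
    "\<forall>d\<in>D. evtl J r (\<lambda>\<beta>. vabs (inf (vabs (xs \<beta> - x)) v - 0) \<le> d)"
    by (rule oconv_genE)
  have "sle (sminus l ?c) (T d)" if "d \<in> D" for d
  proof -
    have "sle l (splus (T d) ?c)"
    proof (rule lower)
      show "splus (T d) ?c \<in> Srep SX"
        by (rule Srep_splus[OF T_Srep c(1)])
      show "sle (szero SX) (splus (T d) ?c)"
        using T_nonneg_pt D(3) that c(2) by (auto simp: sle_def splus_def szero_def)
      show "evtl J r (\<lambda>\<beta>. sle (sabs (sminus (sinf (sabs (sminus (T (xs \<beta>)) (T x))) w) (szero SX)))
          (splus (T d) ?c))"
        using D(6) that truncated_distance_sle[OF v w]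
        by (auto simp: vl.abs_of_nonneg v elim!: evtl_mono)
    qed
    show ?thesis
      unfolding sle_def
    proof
      fix t assume "t \<in> fst (sminus l ?c) \<inter> fst (T d)"
      then have "snd l t \<le> snd (T d) t + snd ?c t"
        using sleD[OF \<open>sle l (splus (T d) ?c)\<close>, of t] by (simp add: splus_def sminus_def)
      then show "snd (sminus l ?c) t \<le> snd (T d) t"
        by (simp add: sminus_def)
    qed
  qed
  then have "sle (sminus l ?c) (szero SX)"
    using D(3,5) Srep_sminus[OF l c(1)] by (intro sle_szero_if_sle_T_null[of D]) auto
  then show ?thesis
    unfolding sle_def using SrepD(3)[OF l] by (auto simp: sminus_def szero_def)
qed

text \<open>On the slice of \<alpha>, the truncation of w at n is attained by T (n u \<alpha>).\<close>
lemma sle_const_truncation_if_sle_T_truncations: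
  assumes l: "l \<in> Srep SX" and w: "w \<in> Srep SX"
    and le_T: "\<And>v. 0 \<le> v \<Longrightarrow> sle l (sminus w (sinf w (T v)))"
  shows "sle l (sminus w (sinf w (topspace SX, \<lambda>_. real n)))"
proof (rule sle_if_slices[OF l Srep_sminus[OF w Srep_sinf[OF w Srep_continuous_map]]])
  fix \<alpha> assume \<alpha>: "\<alpha> \<in> I"
  let ?v = "real n *\<^sub>R u \<alpha>"
  have "0 \<le> ?v"
    using unit_nonneg[OF \<alpha>] by (simp add: scaleR_nonneg_nonneg)
  then have le: "sle l (sminus w (sinf w (T ?v)))"
    by (rule le_T)
  let ?V = "fst (Ta \<alpha> ?v) \<inter> fst (Ta \<alpha> (u \<alpha>)) \<inter> {s. (\<alpha>, s) \<in> fst (T ?v)}"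
  have "dense_openin (X \<alpha>) ?V"
    using \<alpha> dense_openin_slice[OF dense_openin_T \<alpha>]
    by (intro dense_openin_Int dense_openin_Ta B_scaleR unit_in_B)
  moreover have "snd l (\<alpha>, s) \<le> snd (sminus w (sinf w (topspace SX, \<lambda>_. real n))) (\<alpha>, s)"
    if "s \<in> ?V" "(\<alpha>, s) \<in> fst l" "(\<alpha>, s) \<in> fst (sminus w (sinf w (topspace SX, \<lambda>_. real n)))" for s
  proof -
    have "snd (T ?v) (\<alpha>, s) = real n"
      using T_scaled_unit_pt[OF \<alpha>] that(1) by blast
    moreover have "snd l (\<alpha>, s) \<le> snd (sminus w (sinf w (T ?v))) (\<alpha>, s)"
      using sleD[OF le] that by (simp add: sminus_def sinf_def)
    ultimately show ?thesis
      by (simp add: sminus_def sinf_def)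
  qed
  ultimately show "\<exists>V. dense_openin (X \<alpha>) V \<and> (\<forall>s\<in>V. (\<alpha>, s) \<in> fst l \<longrightarrow>
      (\<alpha>, s) \<in> fst (sminus w (sinf w (topspace SX, \<lambda>_. real n))) \<longrightarrow>
      snd l (\<alpha>, s) \<le> snd (sminus w (sinf w (topspace SX, \<lambda>_. real n))) (\<alpha>, s))"
    by blast
qed simp

theorem T_uo_continuous:
  assumes dir: "directed_set J r" and uo: "uoconvE J r xs x"
  shows "uoconvS SX J r (\<lambda>\<beta>. T (xs \<beta>)) (T x)"
  unfolding uoconvS_def uoconv_gen_def
proof (intro ballI impI)
  fix w assume w: "w \<in> Srep SX" "sle (szero SX) w"
  let ?f = "\<lambda>\<beta>. sinf (sabs (sminus (T (xs \<beta>)) (T x))) w"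
  show "oconv_gen (Srep SX) sle (szero SX) (\<lambda>p q. sabs (sminus p q)) J r ?f (szero SX)"
  proof (rule oconv_gen_if_eventual_bounds[OF dir, where mt = sinf and bd = w])
    show "sinf p q \<in> Srep SX \<and> sle (sinf p q) p \<and> sle (sinf p q) q" if "p \<in> Srep SX" "q \<in> Srep SX" for p q
      using that by (simp add: Srep_sinf sle_sinf_left sle_sinf_right)
    show "sle y (sinf p q)" if "sle y p" "sle y q" for y p q
      using that by (rule sle_sinfI)
    have "sle (sabs (sminus (?f \<beta>) (szero SX))) w" for \<beta>
      using w(2) unfolding sle_def by (auto simp: sabs_def sminus_def sinf_def szero_def)
    then show "evtl J r (\<lambda>\<beta>. sle (sabs (sminus (?f \<beta>) (szero SX))) w)"
      using dir unfolding evtl_def directed_set_def by blast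
    fix l assume l: "l \<in> Srep SX" and lower: "\<And>d. d \<in> Srep SX \<Longrightarrow> sle (szero SX) d \<Longrightarrow>
      evtl J r (\<lambda>\<beta>. sle (sabs (sminus (?f \<beta>) (szero SX))) d) \<Longrightarrow> sle l d"
    have "\<And>v. 0 \<le> v \<Longrightarrow> sle l (sminus w (sinf w (T v)))"
      using sle_truncation_if_uo_lower_bound[OF uo _ w l lower] .
    then have "sle l (sminus w (sinf w (topspace SX, \<lambda>_. real n)))" for n
      by (rule sle_const_truncation_if_sle_T_truncations[OF l w(1)])
    then show "sle l (szero SX)"
      by (rule sle_szero_if_le_truncations[OF l w(1)])
  qed (use w in blast)+
qed

lemma T_sle_diff_if_le:
  assumes "m \<le> v - f"
  shows "sle (T f) (sminus (T v) (T m))"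
proof (rule sle_if_le_on_dense[OF T_Srep Srep_sminus[OF T_Srep T_Srep] dense_openin_T[of "v - f"]],
    intro ballI)
  fix t assume "t \<in> fst (T f) \<inter> fst (sminus (T v) (T m)) \<inter> fst (T (v - f))"
  then have t: "t \<in> fst (T f)" "t \<in> fst (T v)" "t \<in> fst (T m)" "t \<in> fst (T (v - f))"
    by (auto simp: sminus_def)
  then have "snd (T m) t \<le> snd (T v) t - snd (T f) t"
    using sleD[OF T_mono[OF assms] t(3,4)] T_diff_pt[OF t(4,2,1)] by simp
  then show "snd (T f) t \<le> snd (sminus (T v) (T m)) t"
    by (simp add: sminus_def)
qed

lemma inf_vabs_le_if_T_bound:
  assumes v: "0 \<le> v" and d: "d \<in> Srep SX"
    and bound: "sle (sabs (sminus (sinf (sabs (sminus (T a) (T b))) (T v)) (szero SX))) d"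
    and f: "sle (T f) (sminus (T v) (sinf d (T v)))"
  shows "inf (vabs (a - b)) v \<le> v - f"
proof (rule T_reflect, rule sle_if_le_on_dense[OF T_Srep T_Srep])
  let ?m = "inf (vabs (a - b)) v"
  let ?V = "fst (T a) \<inter> fst (T b) \<inter> fst (T (a - b)) \<inter> fst (T (vabs (a - b))) \<inter> fst (T v) \<inter> fst (T f)
    \<inter> fst d"
  show "dense_openin SX ?V"
    by (intro dense_openin_Int dense_openin_T SrepD(1)[OF d])
  show "\<forall>t\<in>fst (T ?m) \<inter> fst (T (v - f)) \<inter> ?V. snd (T ?m) t \<le> snd (T (v - f)) t"
  proof
    fix t assume t: "t \<in> fst (T ?m) \<inter> fst (T (v - f)) \<inter> ?V"
    define F where "F = min \<bar>snd (T a) t - snd (T b) t\<bar> (snd (T v) t)"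
    have m: "snd (T ?m) t = F"
      using t T_inf_pt[OF vl.abs_ge_zero v] T_vabs_pt T_diff_pt by (auto simp: F_def)
    have "0 \<le> F"
      using T_nonneg_pt[OF v] t by (simp add: F_def)
    moreover have "t \<in> topspace SX"
      using t SrepD(3)[OF T_Srep[of a]] by blast
    ultimately have "F \<le> snd d t"
      using sleD[OF bound, of t] t by (simp add: F_def sabs_def sminus_def sinf_def szero_def)
    moreover have "snd (T f) t \<le> snd (T v) t - min (snd d t) (snd (T v) t)"
      using sleD[OF f, of t] t by (simp add: sminus_def sinf_def)
    moreover have "snd (T (v - f)) t = snd (T v) t - snd (T f) t"
      using T_diff_pt t by blast
    ultimately show "snd (T ?m) t \<le> snd (T (v - f)) t"
      unfolding m by (simp add: F_def)
  qed
qed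

lemma T_sle_uo_bound:
  assumes v: "0 \<le> v" and d: "d \<in> Srep SX" "sle (szero SX) d"
    and eventually_bounded:
      "evtl J r (\<lambda>\<beta>. sle (sabs (sminus (sinf (sabs (sminus (T (xs \<beta>)) (T x))) (T v)) (szero SX))) d)"
    and lower: "\<And>e. 0 \<le> e \<Longrightarrow> evtl J r (\<lambda>\<beta>. vabs (inf (vabs (xs \<beta> - x)) v - 0) \<le> e) \<Longrightarrow> m \<le> e"
  shows "sle (T m) d"
proof -
  let ?h = "sminus (T v) (sinf d (T v))"
  have d0: "0 \<le> snd d t" if "t \<in> fst d" for t
    using d that by (simp add: szero_sle_iff)
  have h: "?h \<in> Srep SX" "sle (szero SX) ?h" "sle ?h (T v)"
    using Srep_sminus[OF T_Srep Srep_sinf[OF d(1) T_Srep]] d0 T_nonneg_pt[OF v]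
    by (auto simp: sle_def sminus_def sinf_def szero_def)
  have "sle ?h (sminus (T v) (T m))"
  proof (rule sle_if_T_minorants_sle[OF h(1,2) Srep_sminus[OF T_Srep T_Srep]])
    fix f assume f: "0 \<le> f" "sle (T f) ?h"
    have "f \<le> v"
      using T_reflect sle_trans[OF T_Srep h(1) T_Srep f(2) h(3)] .
    moreover have "evtl J r (\<lambda>\<beta>. vabs (inf (vabs (xs \<beta> - x)) v - 0) \<le> v - f)"
      using eventually_bounded inf_vabs_le_if_T_bound[OF v d(1) _ f(2)]
      by (auto simp: vl.abs_of_nonneg v elim!: evtl_mono)
    ultimately have "m \<le> v - f"
      by (simp add: lower)
    then show "sle (T f) (sminus (T v) (T m))"
      by (rule T_sle_diff_if_le)
  qed
  show ?thesis
  proof (rule sle_if_le_on_dense[OF T_Srep d(1) dense_openin_T[of v]], intro ballI)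
    fix t assume t: "t \<in> fst (T m) \<inter> fst d \<inter> fst (T v)"
    then have "snd (T v) t - min (snd d t) (snd (T v) t) \<le> snd (T v) t - snd (T m) t"
      using sleD[OF \<open>sle ?h (sminus (T v) (T m))\<close>, of t] by (simp add: sminus_def sinf_def)
    then show "snd (T m) t \<le> snd d t"
      by linarith
  qed
qed

theorem T_inverse_uo_continuous:
  assumes dir: "directed_set J r" and uo: "uoconvS SX J r (\<lambda>\<beta>. T (xs \<beta>)) (T x)"
  shows "uoconvE J r xs x"
  unfolding uoconvE_def uoconv_gen_def
proof (intro ballI impI)
  fix v :: 'e assume v: "0 \<le> v"
  show "oconv_gen UNIV (\<le>) 0 (\<lambda>a b. vabs (a - b)) J r (\<lambda>\<beta>. inf (vabs (xs \<beta> - x)) v) 0"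
  proof (rule oconv_gen_if_eventual_bounds[OF dir, where mt = inf and bd = v])
    have "vabs (inf (vabs (xs \<beta> - x)) v - 0) \<le> v" for \<beta>
      using v by (simp add: vl.abs_of_nonneg)
    then show "evtl J r (\<lambda>\<beta>. vabs (inf (vabs (xs \<beta> - x)) v - 0) \<le> v)"
      using dir unfolding evtl_def directed_set_def by blast
    fix l assume lower: "\<And>d. d \<in> UNIV \<Longrightarrow> 0 \<le> d \<Longrightarrow>
      evtl J r (\<lambda>\<beta>. vabs (inf (vabs (xs \<beta> - x)) v - 0) \<le> d) \<Longrightarrow> l \<le> d"
    have "oconv_gen (Srep SX) sle (szero SX) (\<lambda>p q. sabs (sminus p q)) J r
        (\<lambda>\<beta>. sinf (sabs (sminus (T (xs \<beta>)) (T x))) (T v)) (szero SX)"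
      using uo T_Srep T_nonneg[OF v] unfolding uoconvS_def uoconv_gen_def by blast
    then obtain D where D: "D \<subseteq> Srep SX" "D \<noteq> {}" "\<forall>d\<in>D. sle (szero SX) d"
      "\<forall>a\<in>D. \<forall>b\<in>D. \<exists>c\<in>D. sle c a \<and> sle c b" "\<forall>w\<in>Srep SX. (\<forall>d\<in>D. sle w d) \<longrightarrow> sle w (szero SX)"
      "\<forall>d\<in>D. evtl J r (\<lambda>\<beta>. sle (sabs (sminus (sinf (sabs (sminus (T (xs \<beta>)) (T x))) (T v)) (szero SX))) d)"
      by (rule oconv_genE)
    have "vpos l \<le> e" if "0 \<le> e" "evtl J r (\<lambda>\<beta>. vabs (inf (vabs (xs \<beta> - x)) v - 0) \<le> e)" for e
      using lower[OF UNIV_I that] that(1) by (simp add: vpos_def)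
    then have "sle (T (vpos l)) d" if "d \<in> D" for d
      using D(1,3,6) that by (intro T_sle_uo_bound[OF v]) auto
    then have "vpos l \<le> 0"
      using D(5) T_Srep T_nonpos by blast
    then show "l \<le> 0"
      by (simp add: vpos_def)
  next
    show "inf a b \<in> UNIV \<and> inf a b \<le> a \<and> inf a b \<le> b" for a b :: 'e
      by simp
    show "y \<le> inf a b" if "y \<le> a" "y \<le> b" for y a b :: 'e
      using that by simp
  qed (use v in simp_all)
qed

end

theorem theorem3p4:
  fixes I :: "'i set"
    and B :: "'i \<Rightarrow> 'e::{ordered_real_vector,lattice} set"
    and u :: "'i \<Rightarrow> 'e"
    and X :: "'i \<Rightarrow> 'x topology"
    and Ta :: "'i \<Rightarrow> 'e \<Rightarrow> 'x srep"
    and T :: "'e \<Rightarrow> ('i \<times> 'x) srep"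
  assumes arch: "archimedean_vl TYPE('e)"
    and bands: "\<forall>\<alpha>\<in>I. is_band (B \<alpha>)"
    and disj: "\<forall>\<alpha>\<in>I. \<forall>\<beta>\<in>I. \<alpha> \<noteq> \<beta> \<longrightarrow> (\<forall>a\<in>B \<alpha>. \<forall>b\<in>B \<beta>. vdisjoint a b)"
    and units: "\<forall>\<alpha>\<in>I. weak_unit_of (B \<alpha>) (u \<alpha>)"
    and decomp: "\<forall>x. \<exists>y. band_decomp I B x y"
    and cpt: "\<forall>\<alpha>\<in>I. compact_space (X \<alpha>) \<and> Hausdorff_space (X \<alpha>)"
    and hom: "\<forall>\<alpha>\<in>I. inj_lattice_hom_S (B \<alpha>) (X \<alpha>) (Ta \<alpha>)"
    and unit1: "\<forall>\<alpha>\<in>I. sequiv (Ta \<alpha> (u \<alpha>)) (sone (X \<alpha>))"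
    and dense: "\<forall>\<alpha>\<in>I. supnorm_closure_is_C (X \<alpha>) (Ta \<alpha>) (principal_ideal_in (B \<alpha>) (u \<alpha>))"
    and T_range: "\<forall>x. T x \<in> Srep (sum_topology X I)"
    and T_def: "\<forall>x y. band_decomp I B x y \<longrightarrow>
                  (\<forall>\<alpha>\<in>I. sequiv (sslice \<alpha> (T x)) (Ta \<alpha> (y \<alpha>)))"
  shows "(\<forall>(J::'b set) r xs. directed_set J r \<longrightarrow> oconvE J r xs 0 \<longrightarrow>
             oconvS (sum_topology X I) J r (\<lambda>\<beta>. T (xs \<beta>)) (szero (sum_topology X I)))
       \<and> (\<forall>(J::'b set) r xs x. directed_set J r \<longrightarrow> uoconvE J r xs x \<longrightarrow>
             uoconvS (sum_topology X I) J r (\<lambda>\<beta>. T (xs \<beta>)) (T x))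
       \<and> (\<forall>(J::'b set) r xs x. directed_set J r \<longrightarrow>
             uoconvS (sum_topology X I) J r (\<lambda>\<beta>. T (xs \<beta>)) (T x) \<longrightarrow> uoconvE J r xs x)"
proof -
  interpret wickstead_representation I B u X Ta T
    using bands disj units decomp cpt hom unit1 dense T_range T_def
    by unfold_locales (auto simp: is_band_def)
  show ?thesis
    using T_order_continuous T_uo_continuous T_inverse_uo_continuous by blast
qed

end
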